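(* Let $\varphi\colon V \to \left( F(r_L, r_Lr_P) \right)^{r_P}$ be the map sending $L \in V$ to $F_{\alpha_1}(L, r_Lr_P) \oplus \ldots \oplus F_{\alpha_{r_P}}(L, r_Lr_P)$. Then $\varphi$ is a surjective map of algebraic sets, and all fibers of $\varphi$ have the same dimension.
   Context: Let $C$ be a field of characteristic zero with algebraic closure $\bar C$, and $\partial x = x\partial+1$. Fix $P\in C[x,y]$ with $r_P=\deg_y P>1$ such that $P(0,y)$ is squarefree of degree $r_P$, and let $g_1,\ldots,g_{r_P}\in\bar C[[x]]$ be the power series roots of $P(x,y)=0$ at zero, with $\alpha_i = g_i(0)$ (these are distinct). Let $d_L\geq (r_Lr_P - r_L + 1)r_P$, and let $V$ be the set of all $L\in\bar C[x][\partial]$ of order $r_L$ and degree at most $d_L$ whose leading coefficient $\operatorname{lc}_\partial(L)$ does not vanish at $\alpha_1,\ldots,\alpha_{r_P}$. For an operator $L$ of order $r$ whose leading coefficient does not vanish at $\alpha$, and $d_1\geq r$, the fundamental matrix of degree $d_1$ at $\alpha$, $F_\alpha(L,d_1)$, is the $r\times(d_1+1)$ matrix whose first $r$ columns form the identity matrix $I_r$ and each of whose rows consists of the first $d_1+1$ coefficients (in powers of $x-\alpha$) of some power series solution of $L$ at $x=\alpha$. $F(r,d)$ denotes the space of all possible fundamental matrices of degree $d$ for operators of order $r$; it is isomorphic to the affine space $\mathbb{A}^{r(d+1-r)}$. *)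

theory Defs
  imports "HOL-Computational_Algebra.Computational_Algebra" "HOL-Library.Extended_Nat"
begin

definition affine_space :: "nat \<Rightarrow> 'a list set" where
  "affine_space n = {xs. length xs = n}"

inductive polyfun :: "nat \<Rightarrow> ('a::comm_ring_1 list \<Rightarrow> 'a) \<Rightarrow> bool" for n where
  pf_const: "polyfun n (\<lambda>_. c)"
| pf_var: "i < n \<Longrightarrow> polyfun n (\<lambda>xs. xs ! i)"
| pf_add: "polyfun n f \<Longrightarrow> polyfun n g \<Longrightarrow> polyfun n (\<lambda>xs. f xs + g xs)"
| pf_mult: "polyfun n f \<Longrightarrow> polyfun n g \<Longrightarrow> polyfun n (\<lambda>xs. f xs * g xs)"

definition zariski_closed :: "nat \<Rightarrow> 'a::comm_ring_1 list set \<Rightarrow> bool" where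
  "zariski_closed n S \<longleftrightarrow>
     (\<exists>F. (\<forall>f\<in>F. polyfun n f) \<and> S = {xs \<in> affine_space n. \<forall>f\<in>F. f xs = 0})"

definition zariski_open :: "nat \<Rightarrow> 'a::comm_ring_1 list set \<Rightarrow> bool" where
  "zariski_open n U \<longleftrightarrow> U \<subseteq> affine_space n \<and> zariski_closed n (affine_space n - U)"

definition closedin_Z :: "nat \<Rightarrow> 'a::comm_ring_1 list set \<Rightarrow> 'a list set \<Rightarrow> bool" where
  "closedin_Z n S Y \<longleftrightarrow> (\<exists>Z. zariski_closed n Z \<and> Y = S \<inter> Z)"

definition irreducible_closedin_Z :: "nat \<Rightarrow> 'a::comm_ring_1 list set \<Rightarrow> 'a list set \<Rightarrow> bool" where
  "irreducible_closedin_Z n S Y \<longleftrightarrow> closedin_Z n S Y \<and> Y \<noteq> {} \<and>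
     (\<forall>A B. closedin_Z n S A \<longrightarrow> closedin_Z n S B \<longrightarrow> Y \<subseteq> A \<union> B \<longrightarrow> Y \<subseteq> A \<or> Y \<subseteq> B)"

definition zdim :: "nat \<Rightarrow> 'a::comm_ring_1 list set \<Rightarrow> enat" where
  "zdim n S = Sup {enat k | k. \<exists>Y. (\<forall>i\<le>k. irreducible_closedin_Z n S (Y i)) \<and>
                                   (\<forall>i<k. Y i \<subset> Y (Suc i))}"

text \<open>A regular map (morphism) from X, embedded into A^n via c, to A^m: locally each
  coordinate is a quotient of polynomial functions with non-vanishing denominator.\<close>

definition regular_map ::
  "nat \<Rightarrow> nat \<Rightarrow> ('b \<Rightarrow> 'a::field list) \<Rightarrow> 'b set \<Rightarrow> ('b \<Rightarrow> 'a list) \<Rightarrow> bool" where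
  "regular_map n m c X h \<longleftrightarrow>
     inj_on c X \<and> c ` X \<subseteq> affine_space n \<and> h ` X \<subseteq> affine_space m \<and>
     (\<forall>x\<in>X. \<forall>k<m. \<exists>U p q. zariski_open n U \<and> c x \<in> U \<and> polyfun n p \<and> polyfun n q \<and>
        (\<forall>y\<in>X. c y \<in> U \<longrightarrow> q (c y) \<noteq> 0 \<and> h y ! k = p (c y) / q (c y)))"

definition is_subfield :: "'a::field set \<Rightarrow> bool" where
  "is_subfield C \<longleftrightarrow> 0 \<in> C \<and> 1 \<in> C \<and>
     (\<forall>a\<in>C. \<forall>b\<in>C. a + b \<in> C \<and> a - b \<in> C \<and> a * b \<in> C) \<and> (\<forall>a\<in>C. inverse a \<in> C)"

definition algebraic_over :: "'a::field set \<Rightarrow> bool" where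
  "algebraic_over C \<longleftrightarrow> (\<forall>z. \<exists>p. p \<noteq> 0 \<and> (\<forall>k. coeff p k \<in> C) \<and> poly p z = 0)"

text \<open>An operator L = \<Sum>_j l_j(x) \<partial>^j in \<bar>C[x][\<partial>] (normal form with coefficients on the left,
  \<partial>x = x\<partial> + 1) is represented by its coefficient function l :: nat \<Rightarrow> 'a poly.\<close>

definition op_order :: "(nat \<Rightarrow> 'a::zero poly) \<Rightarrow> nat \<Rightarrow> bool" where
  "op_order l r \<longleftrightarrow> l r \<noteq> 0 \<and> (\<forall>j>r. l j = 0)"

definition op_degree_le :: "(nat \<Rightarrow> 'a::zero poly) \<Rightarrow> nat \<Rightarrow> bool" where
  "op_degree_le l d \<longleftrightarrow> (\<forall>j. degree (l j) \<le> d)"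

text \<open>f (a power series in t = x - \<alpha>) is a solution of L (of order r) at x = \<alpha>.\<close>

definition op_solution_at ::
  "nat \<Rightarrow> (nat \<Rightarrow> 'a::field poly) \<Rightarrow> 'a \<Rightarrow> 'a fps \<Rightarrow> bool" where
  "op_solution_at r l \<alpha> f \<longleftrightarrow>
     (\<Sum>j\<le>r. fps_of_poly (pcompose (l j) [:\<alpha>, 1:]) * (fps_deriv ^^ j) f) = 0"

definition fmat_space :: "nat \<Rightarrow> nat \<Rightarrow> (nat \<Rightarrow> nat \<Rightarrow> 'a::zero_neq_one) set" where
  "fmat_space r d1 = {M. (\<forall>a<r. \<forall>b<r. M a b = (if a = b then 1 else 0)) \<and>
                         (\<forall>a b. (r \<le> a \<or> d1 < b) \<longrightarrow> M a b = 0)}"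

definition is_fundamental_matrix ::
  "nat \<Rightarrow> (nat \<Rightarrow> 'a::field poly) \<Rightarrow> 'a \<Rightarrow> nat \<Rightarrow> (nat \<Rightarrow> nat \<Rightarrow> 'a) \<Rightarrow> bool" where
  "is_fundamental_matrix r l \<alpha> d1 M \<longleftrightarrow> M \<in> fmat_space r d1 \<and>
     (\<forall>a<r. \<exists>f. op_solution_at r l \<alpha> f \<and> (\<forall>b\<le>d1. fps_nth f b = M a b))"

definition fundamental_matrix ::
  "nat \<Rightarrow> (nat \<Rightarrow> 'a::field poly) \<Rightarrow> 'a \<Rightarrow> nat \<Rightarrow> (nat \<Rightarrow> nat \<Rightarrow> 'a)" where
  "fundamental_matrix r l \<alpha> d1 = (THE M. is_fundamental_matrix r l \<alpha> d1 M)"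

text \<open>Tuples of s matrices (index i < s; zero outside), and their affine coordinates
  (the non-identity entries).\<close>

definition fmat_power :: "nat \<Rightarrow> nat \<Rightarrow> nat \<Rightarrow> (nat \<Rightarrow> nat \<Rightarrow> nat \<Rightarrow> 'a::zero_neq_one) set" where
  "fmat_power r d1 s = {Ms. (\<forall>i<s. Ms i \<in> fmat_space r d1) \<and> (\<forall>i\<ge>s. Ms i = (\<lambda>_ _. 0))}"

definition fmat_power_coords :: "nat \<Rightarrow> nat \<Rightarrow> nat \<Rightarrow> (nat \<Rightarrow> nat \<Rightarrow> nat \<Rightarrow> 'a) \<Rightarrow> 'a list" where
  "fmat_power_coords r d1 s Ms =
     concat (map (\<lambda>i. concat (map (\<lambda>a. map (\<lambda>b. Ms i a b) [r..<Suc d1]) [0..<r])) [0..<s])"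

definition op_coords :: "nat \<Rightarrow> nat \<Rightarrow> (nat \<Rightarrow> 'a::zero poly) \<Rightarrow> 'a list" where
  "op_coords r d l = concat (map (\<lambda>j. map (\<lambda>k. coeff (l j) k) [0..<Suc d]) [0..<Suc r])"

definition phi_map ::
  "nat \<Rightarrow> nat \<Rightarrow> (nat \<Rightarrow> 'a::field) \<Rightarrow> nat \<Rightarrow> (nat \<Rightarrow> 'a poly) \<Rightarrow> (nat \<Rightarrow> nat \<Rightarrow> nat \<Rightarrow> 'a)" where
  "phi_map r d1 \<alpha> s l = (\<lambda>i. if i < s then fundamental_matrix r l (\<alpha> i) d1 else (\<lambda>_ _. 0))"

text \<open>Evaluation P(x, h(x)) for P \<in> K[x][y] (outer variable y) and a power series h.\<close>

definition eval_bivar_fps :: "'a::comm_ring_1 poly poly \<Rightarrow> 'a fps \<Rightarrow> 'a fps" where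
  "eval_bivar_fps P h = (\<Sum>k\<le>degree P. fps_of_poly (coeff P k) * h ^ k)"

end

theory Submission
  imports Defs
begin

(*
  Expanding L around x = alpha, the coefficients of a power series solution are produced by a
  recursion whose only division is by the leading coefficient of L at alpha times a nonzero
  Pochhammer symbol; hence the entries of F_alpha(L, d) are rational functions of the
  coefficients of L that are defined on all of V, and phi is regular.  Moreover F_alpha(L, d)
  only depends on the Taylor coefficients of the l_j at alpha up to order N = d + 1 - r, and for
  monic L the conditions on these coefficients form a unitriangular linear system.  Solving it at
  every alpha_i and interpolating (Chinese remainder theorem modulo the (x - alpha_i)^N) gives an
  operator of degree < r_P N <= d_L with any prescribed image, so phi is surjective.
  The same triangularity shows: if E is monic with phi(E) = M, then phi(L) = M iff
  Q = prod_i (x - alpha_i)^N divides every l_j - l_r E_j.  Consequently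
  l_j |-> l_j - (l_r E_j mod Q) + (l_r E'_j mod Q) is a polynomial automorphism of the
  coefficient space mapping the fiber over phi(E) onto the fiber over phi(E'), and such
  automorphisms preserve the Krull dimension.
*)

section \<open>Course-of-values recursion\<close>

text \<open>\<open>cov_rec st\<close> is the sequence u with u n = st n u, provided st n only inspects u m for m < n.\<close>

primrec cov_prefix :: "(nat \<Rightarrow> (nat \<Rightarrow> 'b) \<Rightarrow> 'b) \<Rightarrow> nat \<Rightarrow> 'b list" where
  "cov_prefix st 0 = []"
| "cov_prefix st (Suc n) = cov_prefix st n @ [st n (\<lambda>m. cov_prefix st n ! m)]"

declare cov_prefix.simps(2)[simp del]

definition cov_rec :: "(nat \<Rightarrow> (nat \<Rightarrow> 'b) \<Rightarrow> 'b) \<Rightarrow> nat \<Rightarrow> 'b" where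
  "cov_rec st n = cov_prefix st (Suc n) ! n"

lemma length_cov_prefix [simp]: "length (cov_prefix st n) = n"
  by (induction n) (auto simp: cov_prefix.simps)

lemma cov_prefix_nth_extend: "m < n \<Longrightarrow> cov_prefix st (n + k) ! m = cov_prefix st n ! m"
  by (induction k) (simp_all add: cov_prefix.simps nth_append)

lemma cov_rec_unfold:
  assumes dep: "\<And>n u v. (\<And>m. m < n \<Longrightarrow> u m = v m) \<Longrightarrow> st n u = st n v"
  shows "cov_rec st n = st n (cov_rec st)"
proof -
  have "cov_rec st n = st n (\<lambda>m. cov_prefix st n ! m)"
    by (simp add: cov_rec_def cov_prefix.simps nth_append)
  also have "\<dots> = st n (cov_rec st)"
  proof (rule dep)
    fix m assume "m < n"
    then show "cov_prefix st n ! m = cov_rec st m"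
      using cov_prefix_nth_extend[of m "Suc m" st "n - Suc m"] by (simp add: cov_rec_def)
  qed
  finally show ?thesis .
qed

lemma length_concat_map_upt:
  assumes "\<And>i. i < t \<Longrightarrow> length (F i) = w"
  shows "length (concat (map F [0..<t])) = t * w"
  using assms by (induction t) (auto simp: length_concat)

lemma nth_concat_map_upt:
  assumes "\<And>i. i < t \<Longrightarrow> length (F i) = w" and "k < t * w"
  shows "concat (map F [0..<t]) ! k = F (k div w) ! (k mod w)"
  using assms
proof (induction t)
  case 0 then show ?case by simp
next
  case (Suc t)
  have len: "length (concat (map F [0..<t])) = t * w"
    using Suc.prems(1) by (intro length_concat_map_upt) simp
  show ?case
  proof (cases "k < t * w")
    case True
    then show ?thesis using Suc by (simp add: nth_append len)
  next
    case False
    have "k div w = t"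
      using False Suc.prems(2) by (intro div_nat_eqI) (simp_all add: mult.commute)
    moreover have "k mod w = k - t * w"
      using \<open>k div w = t\<close> by (metis minus_div_mult_eq_mod mult.commute)
    ultimately show ?thesis using False by (simp add: nth_append len)
  qed
qed

lemma polyfun_sum:
  assumes "finite A" "\<And>i. i \<in> A \<Longrightarrow> polyfun n (f i)"
  shows "polyfun n (\<lambda>xs. \<Sum>i\<in>A. f i xs)"
  using assms by (induction A rule: finite_induct) (simp_all add: pf_const pf_add)

lemma polyfun_diff:
  assumes "polyfun n f" "polyfun n g"
  shows "polyfun n (\<lambda>xs. f xs - (g xs :: 'a::comm_ring_1))"
proof -
  have "polyfun n (\<lambda>xs. f xs + (\<lambda>_. -1) xs * g xs)"
    by (intro pf_add pf_mult pf_const assms)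
  then show ?thesis by simp
qed

lemma polyfun_compose:
  assumes "polyfun n f" "\<And>i. i < n \<Longrightarrow> polyfun m (\<lambda>xs. \<tau> xs ! i)"
  shows "polyfun m (\<lambda>xs. f (\<tau> xs))"
  using assms(1) by induction (use assms(2) in \<open>auto intro: polyfun.intros\<close>)

definition ratfun :: "nat \<Rightarrow> ('b \<Rightarrow> 'a::field list) \<Rightarrow> 'b set \<Rightarrow> ('b \<Rightarrow> 'a) \<Rightarrow> bool" where
  "ratfun n c X h \<longleftrightarrow> (\<exists>p q. polyfun n p \<and> polyfun n q \<and>
      (\<forall>y\<in>X. q (c y) \<noteq> 0 \<and> h y = p (c y) / q (c y)))"

lemma ratfun_polyfun: "polyfun n p \<Longrightarrow> ratfun n c X (\<lambda>y. p (c y))"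
  unfolding ratfun_def by (intro exI[of _ p] exI[of _ "\<lambda>_. 1"]) (auto intro: pf_const)

lemma ratfun_const: "ratfun n c X (\<lambda>y. a)"
  using ratfun_polyfun[OF pf_const] .

lemma ratfun_add:
  assumes "ratfun n c X f" "ratfun n c X g"
  shows "ratfun n c X (\<lambda>y. f y + g y)"
proof -
  obtain p1 q1 where 1: "polyfun n p1" "polyfun n q1" "\<forall>y\<in>X. q1 (c y) \<noteq> 0 \<and> f y = p1 (c y) / q1 (c y)"
    using assms(1) unfolding ratfun_def by blast
  obtain p2 q2 where 2: "polyfun n p2" "polyfun n q2" "\<forall>y\<in>X. q2 (c y) \<noteq> 0 \<and> g y = p2 (c y) / q2 (c y)"
    using assms(2) unfolding ratfun_def by blast
  show ?thesis unfolding ratfun_def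
    by (rule exI[of _ "\<lambda>xs. p1 xs * q2 xs + p2 xs * q1 xs"], rule exI[of _ "\<lambda>xs. q1 xs * q2 xs"])
       (use 1 2 in \<open>auto intro!: pf_add pf_mult simp: field_simps\<close>)
qed

lemma ratfun_mult:
  assumes "ratfun n c X f" "ratfun n c X g"
  shows "ratfun n c X (\<lambda>y. f y * g y)"
proof -
  obtain p1 q1 where 1: "polyfun n p1" "polyfun n q1" "\<forall>y\<in>X. q1 (c y) \<noteq> 0 \<and> f y = p1 (c y) / q1 (c y)"
    using assms(1) unfolding ratfun_def by blast
  obtain p2 q2 where 2: "polyfun n p2" "polyfun n q2" "\<forall>y\<in>X. q2 (c y) \<noteq> 0 \<and> g y = p2 (c y) / q2 (c y)"
    using assms(2) unfolding ratfun_def by blast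
  show ?thesis unfolding ratfun_def
    by (rule exI[of _ "\<lambda>xs. p1 xs * p2 xs"], rule exI[of _ "\<lambda>xs. q1 xs * q2 xs"])
       (use 1 2 in \<open>auto intro!: pf_mult simp: field_simps\<close>)
qed

lemma ratfun_divide:
  assumes "ratfun n c X f" "ratfun n c X g" "\<And>y. y \<in> X \<Longrightarrow> g y \<noteq> 0"
  shows "ratfun n c X (\<lambda>y. f y / g y)"
proof -
  obtain p1 q1 where 1: "polyfun n p1" "polyfun n q1" "\<forall>y\<in>X. q1 (c y) \<noteq> 0 \<and> f y = p1 (c y) / q1 (c y)"
    using assms(1) unfolding ratfun_def by blast
  obtain p2 q2 where 2: "polyfun n p2" "polyfun n q2" "\<forall>y\<in>X. q2 (c y) \<noteq> 0 \<and> g y = p2 (c y) / q2 (c y)"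
    using assms(2) unfolding ratfun_def by blast
  have nz: "\<forall>y\<in>X. p2 (c y) \<noteq> 0" using 2 assms(3) by fastforce
  show ?thesis unfolding ratfun_def
    by (rule exI[of _ "\<lambda>xs. p1 xs * q2 xs"], rule exI[of _ "\<lambda>xs. q1 xs * p2 xs"])
       (use 1 2 nz in \<open>auto intro!: pf_mult simp: field_simps\<close>)
qed

lemma ratfun_sum:
  assumes "finite A" "\<And>i. i \<in> A \<Longrightarrow> ratfun n c X (f i)"
  shows "ratfun n c X (\<lambda>y. \<Sum>i\<in>A. f i y)"
  using assms by (induction A rule: finite_induct) (simp_all add: ratfun_const ratfun_add)

lemma ratfun_cong: "ratfun n c X f \<Longrightarrow> (\<And>y. y \<in> X \<Longrightarrow> f y = g y) \<Longrightarrow> ratfun n c X g"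
  unfolding ratfun_def by auto

section \<open>Polynomial automorphisms preserve the dimension\<close>

definition poly_automorphism :: "nat \<Rightarrow> ('a::comm_ring_1 list \<Rightarrow> 'a list) \<Rightarrow> ('a list \<Rightarrow> 'a list) \<Rightarrow> bool"
  where "poly_automorphism n \<tau> \<rho> \<longleftrightarrow>
    (\<forall>xs\<in>affine_space n. \<tau> xs \<in> affine_space n \<and> \<rho> xs \<in> affine_space n \<and>
        \<rho> (\<tau> xs) = xs \<and> \<tau> (\<rho> xs) = xs) \<and>
    (\<forall>i<n. polyfun n (\<lambda>xs. \<tau> xs ! i) \<and> polyfun n (\<lambda>xs. \<rho> xs ! i))"

lemma poly_automorphism_sym: "poly_automorphism n \<tau> \<rho> \<Longrightarrow> poly_automorphism n \<rho> \<tau>"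
  unfolding poly_automorphism_def by blast

lemma poly_automorphism_image_inverse:
  assumes "poly_automorphism n \<tau> \<rho>" "S \<subseteq> affine_space n"
  shows "\<rho> ` \<tau> ` S = S" and "\<tau> ` S \<subseteq> affine_space n"
proof -
  have "\<rho> (\<tau> x) = x" if "x \<in> S" for x
    using assms that unfolding poly_automorphism_def by blast
  then show "\<rho> ` \<tau> ` S = S" by (force simp: image_image)
  show "\<tau> ` S \<subseteq> affine_space n"
    using assms unfolding poly_automorphism_def by blast
qed

lemma closedin_Z_image:
  assumes aut: "poly_automorphism n \<tau> \<rho>" and S: "S \<subseteq> affine_space n"
    and Y: "closedin_Z n S Y"
  shows "closedin_Z n (\<tau> ` S) (\<tau> ` Y)"
proof -
  obtain F where F: "\<forall>f\<in>F. polyfun n f" "Y = S \<inter> {xs \<in> affine_space n. \<forall>f\<in>F. f xs = 0}"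
    using Y unfolding closedin_Z_def zariski_closed_def by blast
  define Z' where "Z' = {xs \<in> affine_space n. \<forall>f\<in>(\<lambda>f xs. f (\<rho> xs)) ` F. f xs = 0}"
  have "zariski_closed n Z'"
    unfolding zariski_closed_def Z'_def
    using F(1) aut by (intro exI[of _ "(\<lambda>f xs. f (\<rho> xs)) ` F"])
      (auto intro: polyfun_compose simp: poly_automorphism_def)
  moreover have "\<tau> ` Y = \<tau> ` S \<inter> Z'"
  proof
    show "\<tau> ` Y \<subseteq> \<tau> ` S \<inter> Z'"
      using aut S unfolding F(2) Z'_def poly_automorphism_def by auto
    show "\<tau> ` S \<inter> Z' \<subseteq> \<tau> ` Y"
    proof
      fix y assume y: "y \<in> \<tau> ` S \<inter> Z'"
      then obtain x where x: "x \<in> S" "y = \<tau> x" by blast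
      then have "\<rho> y = x" "y \<in> affine_space n"
        using aut S unfolding poly_automorphism_def by auto
      then have "x \<in> Y" using y x S unfolding F(2) Z'_def by auto
      then show "y \<in> \<tau> ` Y" using x by blast
    qed
  qed
  ultimately show ?thesis unfolding closedin_Z_def by blast
qed

lemma irreducible_closedin_Z_image:
  assumes aut: "poly_automorphism n \<tau> \<rho>" and S: "S \<subseteq> affine_space n"
    and Y: "irreducible_closedin_Z n S Y"
  shows "irreducible_closedin_Z n (\<tau> ` S) (\<tau> ` Y)"
  unfolding irreducible_closedin_Z_def
proof (intro conjI allI impI)
  have Ycl: "closedin_Z n S Y" using Y by (simp add: irreducible_closedin_Z_def)
  then show "closedin_Z n (\<tau> ` S) (\<tau> ` Y)" by (rule closedin_Z_image[OF aut S])
  show "\<tau> ` Y \<noteq> {}" using Y by (simp add: irreducible_closedin_Z_def)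
  fix B1 B2 assume B: "closedin_Z n (\<tau> ` S) B1" "closedin_Z n (\<tau> ` S) B2" "\<tau> ` Y \<subseteq> B1 \<union> B2"
  note inv = poly_automorphism_image_inverse[OF aut S]
  have pulled_back: "closedin_Z n S (\<rho> ` B)" if "closedin_Z n (\<tau> ` S) B" for B
    using closedin_Z_image[OF poly_automorphism_sym[OF aut] inv(2) that] inv(1) by simp
  have YS: "Y \<subseteq> S" using Ycl unfolding closedin_Z_def by blast
  have "\<rho> ` \<tau> ` Y = Y" using poly_automorphism_image_inverse(1)[OF aut] YS S by blast
  then have "Y \<subseteq> \<rho> ` B1 \<union> \<rho> ` B2" using B(3) by blast
  then have "Y \<subseteq> \<rho> ` B1 \<or> Y \<subseteq> \<rho> ` B2"
    using Y pulled_back[OF B(1)] pulled_back[OF B(2)] unfolding irreducible_closedin_Z_def by blast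
  moreover have "\<tau> ` \<rho> ` B = B" if "closedin_Z n (\<tau> ` S) B" for B
    using poly_automorphism_image_inverse(1)[OF poly_automorphism_sym[OF aut], of B] that inv(2)
    unfolding closedin_Z_def by blast
  ultimately show "\<tau> ` Y \<subseteq> B1 \<or> \<tau> ` Y \<subseteq> B2"
    using B(1,2) image_mono[of Y "\<rho> ` B1" \<tau>] image_mono[of Y "\<rho> ` B2" \<tau>] by auto
qed

lemma zdim_le_zdim_image:
  assumes aut: "poly_automorphism n \<tau> \<rho>" and S: "S \<subseteq> affine_space n"
  shows "zdim n S \<le> zdim n (\<tau> ` S)"
  unfolding zdim_def
proof (rule Sup_subset_mono, rule subsetI)
  fix e assume "e \<in> {enat k | k. \<exists>Y. (\<forall>i\<le>k. irreducible_closedin_Z n S (Y i)) \<and> (\<forall>i<k. Y i \<subset> Y (Suc i))}"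
  then obtain k Y where e: "e = enat k" and irr: "\<forall>i\<le>k. irreducible_closedin_Z n S (Y i)"
    and chain: "\<forall>i<k. Y i \<subset> Y (Suc i)"
    by blast
  have YS: "Y i \<subseteq> S" if "i \<le> k" for i
    using irr that unfolding irreducible_closedin_Z_def closedin_Z_def by blast
  have inj: "inj_on \<tau> S"
  proof (rule inj_onI)
    fix x y assume "x \<in> S" "y \<in> S" "\<tau> x = \<tau> y"
    moreover have "\<forall>z\<in>S. \<rho> (\<tau> z) = z" using aut S unfolding poly_automorphism_def by blast
    ultimately show "x = y" by metis
  qed
  have "\<tau> ` Y i \<subset> \<tau> ` Y (Suc i)" if "i < k" for i
  proof -
    have "Y i \<subset> Y (Suc i)" using chain that by blast
    moreover have "Y i \<subseteq> S" "Y (Suc i) \<subseteq> S" using YS that by simp_all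
    ultimately show ?thesis using inj_on_image_eq_iff[OF inj] image_mono by (metis psubset_eq)
  qed
  moreover have "irreducible_closedin_Z n (\<tau> ` S) (\<tau> ` Y i)" if "i \<le> k" for i
    using irr that irreducible_closedin_Z_image[OF aut S] by blast
  ultimately have "\<exists>Y. (\<forall>i\<le>k. irreducible_closedin_Z n (\<tau> ` S) (Y i)) \<and> (\<forall>i<k. Y i \<subset> Y (Suc i))"
    by (intro exI[of _ "\<lambda>i. \<tau> ` Y i"]) simp
  then show "e \<in> {enat k | k. \<exists>Y. (\<forall>i\<le>k. irreducible_closedin_Z n (\<tau> ` S) (Y i)) \<and>
      (\<forall>i<k. Y i \<subset> Y (Suc i))}"
    unfolding e by blast
qed

lemma zdim_image:
  assumes aut: "poly_automorphism n \<tau> \<rho>" and S: "S \<subseteq> affine_space n"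
  shows "zdim n (\<tau> ` S) = zdim n S"
proof (rule antisym)
  note inv = poly_automorphism_image_inverse[OF aut S]
  show "zdim n (\<tau> ` S) \<le> zdim n S"
    using zdim_le_zdim_image[OF poly_automorphism_sym[OF aut] inv(2)] inv(1) by simp
qed (rule zdim_le_zdim_image[OF aut S])

section \<open>Linear differential operators on formal power series\<close>

definition fps_op :: "nat \<Rightarrow> (nat \<Rightarrow> 'a::field_char_0 fps) \<Rightarrow> 'a fps \<Rightarrow> 'a fps" where
  "fps_op r a f = (\<Sum>j\<le>r. a j * (fps_deriv ^^ j) f)"

lemma fps_op_split_last: "fps_op r a f = (\<Sum>j<r. a j * (fps_deriv ^^ j) f) + a r * (fps_deriv ^^ r) f"
  unfolding fps_op_def lessThan_Suc_atMost[symmetric] sum.lessThan_Suc ..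

lemma fps_nth_deriv_funpow:
  "((fps_deriv ^^ j) f) $ n = pochhammer (of_nat (n + 1)) j * f $ (n + j)"
proof (induction j arbitrary: n)
  case 0 then show ?case by simp
next
  case (Suc j)
  have "((fps_deriv ^^ Suc j) f) $ n = of_nat (n + 1) * ((fps_deriv ^^ j) f) $ (n + 1)"
    by (simp add: fps_deriv_nth)
  also have "\<dots> = pochhammer (of_nat (n + 1)) (Suc j) * f $ (n + Suc j)"
    using Suc by (simp add: pochhammer_rec add_ac mult.assoc)
  finally show ?case .
qed

lemma pochhammer_of_nat_Suc_neq_0: "pochhammer (of_nat (n + 1)) r \<noteq> (0::'a::field_char_0)"
  by (metis pochhammer_of_nat of_nat_eq_0_iff pochhammer_pos zero_less_Suc Suc_eq_plus1
      less_numeral_extra(3))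

lemma sum_sum_pick:
  assumes "finite A" "finite B" "j0 \<in> A" "k0 \<in> B"
  shows "(\<Sum>j\<in>A. \<Sum>k\<in>B. T j k) = T j0 k0 + (\<Sum>j\<in>A. \<Sum>k\<in>B. if j = j0 \<and> k = k0 then 0 else T j k)"
proof -
  have "(\<Sum>j\<in>A. \<Sum>k\<in>B. T j k) =
        (\<Sum>j\<in>A. \<Sum>k\<in>B. (if j = j0 \<and> k = k0 then T j k else 0) + (if j = j0 \<and> k = k0 then 0 else T j k))"
    by (intro sum.cong refl) simp
  also have "\<dots> = (\<Sum>j\<in>A. if j = j0 then T j0 k0 else 0) +
                  (\<Sum>j\<in>A. \<Sum>k\<in>B. if j = j0 \<and> k = k0 then 0 else T j k)"
    unfolding sum.distrib by (intro arg_cong2[where f = "(+)"] sum.cong refl) (use assms in auto)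
  finally show ?thesis using assms by simp
qed

text \<open>The n-th coefficient of L f contains f $ (n + r) only in the leading term, with the factor
  a r $ 0 times a nonzero Pochhammer symbol; the rest only involves lower coefficients of f.\<close>

definition fps_op_rest :: "nat \<Rightarrow> (nat \<Rightarrow> 'a::field_char_0 fps) \<Rightarrow> 'a fps \<Rightarrow> nat \<Rightarrow> 'a" where
  "fps_op_rest r a f n = (\<Sum>j\<le>r. \<Sum>k\<le>n. if j = r \<and> k = 0 then 0
       else a j $ k * (pochhammer (of_nat (n - k + 1)) j * f $ (n - k + j)))"

lemma fps_op_nth:
  "fps_op r a f $ n = a r $ 0 * (pochhammer (of_nat (n + 1)) r * f $ (n + r)) + fps_op_rest r a f n"
proof -
  have "fps_op r a f $ n = (\<Sum>j\<le>r. \<Sum>k\<le>n. a j $ k * ((fps_deriv ^^ j) f) $ (n - k))"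
    unfolding fps_op_def fps_sum_nth fps_mult_nth by (simp add: atLeast0AtMost)
  also have "\<dots> = (\<Sum>j\<le>r. \<Sum>k\<le>n. a j $ k * (pochhammer (of_nat (n - k + 1)) j * f $ (n - k + j)))"
    by (simp add: fps_nth_deriv_funpow)
  also have "\<dots> = a r $ 0 * (pochhammer (of_nat (n - 0 + 1)) r * f $ (n - 0 + r)) + fps_op_rest r a f n"
    unfolding fps_op_rest_def by (rule sum_sum_pick) auto
  finally show ?thesis by simp
qed

lemma fps_op_rest_cong:
  assumes "\<And>m. m < n + r \<Longrightarrow> f $ m = h $ m"
  shows "fps_op_rest r a f n = fps_op_rest r a h n"
  unfolding fps_op_rest_def
proof (intro sum.cong refl)
  fix j k assume "j \<in> {..r}" "k \<in> {..n}"
  then have "j = r \<and> k = 0 \<or> n - k + j < n + r" by auto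
  then show "(if j = r \<and> k = 0 then 0 else a j $ k * (pochhammer (of_nat (n - k + 1)) j * f $ (n - k + j))) =
        (if j = r \<and> k = 0 then 0 else a j $ k * (pochhammer (of_nat (n - k + 1)) j * h $ (n - k + j)))"
    using assms by auto
qed

lemma fps_op_nth_cong:
  assumes "\<And>m. m \<le> n + r \<Longrightarrow> f $ m = h $ m"
  shows "fps_op r a f $ n = fps_op r a h $ n"
  unfolding fps_op_nth using assms fps_op_rest_cong[of n r f h a] by simp

lemma fps_op_eq_imp_nth_eq:
  assumes a0: "a r $ 0 \<noteq> 0"
    and L: "\<And>n. n < K \<Longrightarrow> fps_op r a f $ n = fps_op r a h $ n"
    and init: "\<And>m. m < r \<Longrightarrow> f $ m = h $ m"
  shows "m < K + r \<Longrightarrow> f $ m = h $ m"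
proof (induction m rule: less_induct)
  case (less m)
  show ?case
  proof (cases "m < r")
    case True then show ?thesis using init by simp
  next
    case False
    define n where "n = m - r"
    have m: "m = n + r" "n < K" using False less.prems by (auto simp: n_def)
    have "fps_op_rest r a f n = fps_op_rest r a h n"
      by (rule fps_op_rest_cong) (use less.IH m in auto)
    then have "a r $ 0 * (pochhammer (of_nat (n + 1)) r * f $ m) =
               a r $ 0 * (pochhammer (of_nat (n + 1)) r * h $ m)"
      using L[OF m(2)] unfolding fps_op_nth m(1) by simp
    then show ?thesis using a0 pochhammer_of_nat_Suc_neq_0[of n r] by auto
  qed
qed

definition fps_op_sol :: "nat \<Rightarrow> (nat \<Rightarrow> 'a::field_char_0 fps) \<Rightarrow> (nat \<Rightarrow> 'a) \<Rightarrow> 'a fps" where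
  "fps_op_sol r a v = Abs_fps (cov_rec (\<lambda>m u. if m < r then v m
      else - fps_op_rest r a (Abs_fps u) (m - r) / (a r $ 0 * pochhammer (of_nat (m - r + 1)) r)))"

lemma fps_op_sol_nth:
  "fps_op_sol r a v $ m = (if m < r then v m
      else - fps_op_rest r a (fps_op_sol r a v) (m - r) / (a r $ 0 * pochhammer (of_nat (m - r + 1)) r))"
proof -
  let ?st = "\<lambda>m u. if m < r then v m
      else - fps_op_rest r a (Abs_fps u) (m - r) / (a r $ 0 * pochhammer (of_nat (m - r + 1)) r)"
  have "cov_rec ?st m = ?st m (cov_rec ?st)"
  proof (rule cov_rec_unfold)
    fix n and u w :: "nat \<Rightarrow> 'a"
    assume "\<And>m. m < n \<Longrightarrow> u m = w m"
    then have "r \<le> n \<Longrightarrow> fps_op_rest r a (Abs_fps u) (n - r) = fps_op_rest r a (Abs_fps w) (n - r)"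
      by (intro fps_op_rest_cong) auto
    then show "?st n u = ?st n w" by auto
  qed
  then show ?thesis unfolding fps_op_sol_def by simp
qed

lemma fps_op_sol_init: "m < r \<Longrightarrow> fps_op_sol r a v $ m = v m"
  by (subst fps_op_sol_nth) simp

lemma fps_op_sol_solves:
  assumes "a r $ 0 \<noteq> 0"
  shows "fps_op r a (fps_op_sol r a v) = 0"
proof (rule fps_ext)
  fix n
  have "fps_op_sol r a v $ (n + r) =
      - fps_op_rest r a (fps_op_sol r a v) n / (a r $ 0 * pochhammer (of_nat (n + 1)) r)"
    by (subst fps_op_sol_nth) simp
  then show "fps_op r a (fps_op_sol r a v) $ n = 0 $ n"
    unfolding fps_op_nth using assms pochhammer_of_nat_Suc_neq_0[of n r] by (auto simp: field_simps)
qed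

section \<open>Fundamental matrices\<close>

definition op_at :: "(nat \<Rightarrow> 'a::field_char_0 poly) \<Rightarrow> 'a \<Rightarrow> nat \<Rightarrow> 'a fps" where
  "op_at l \<alpha> j = fps_of_poly (pcompose (l j) [:\<alpha>, 1:])"

lemma op_at_nth_0: "op_at l \<alpha> j $ 0 = poly (l j) \<alpha>"
  by (simp add: op_at_def)

lemma op_solution_at_iff: "op_solution_at r l \<alpha> f \<longleftrightarrow> fps_op r (op_at l \<alpha>) f = 0"
  by (simp add: op_solution_at_def fps_op_def op_at_def)

definition unit_row :: "nat \<Rightarrow> nat \<Rightarrow> 'a::zero_neq_one" where
  "unit_row i m = (if m = i then 1 else 0)"

definition sol_matrix :: "nat \<Rightarrow> (nat \<Rightarrow> 'a::field_char_0 fps) \<Rightarrow> nat \<Rightarrow> nat \<Rightarrow> nat \<Rightarrow> 'a" where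
  "sol_matrix r a d1 = (\<lambda>i b. if i < r \<and> b \<le> d1 then fps_op_sol r a (unit_row i) $ b else 0)"

definition row_fps :: "nat \<Rightarrow> (nat \<Rightarrow> nat \<Rightarrow> 'a::zero) \<Rightarrow> nat \<Rightarrow> 'a fps" where
  "row_fps d1 M i = Abs_fps (\<lambda>b. if b \<le> d1 then M i b else 0)"

lemma row_fps_nth_unit_row:
  assumes "M \<in> fmat_space r d1" "r \<le> Suc d1" "i < r" "j < r"
  shows "row_fps d1 M i $ j = unit_row i j"
  using assms by (auto simp: row_fps_def fmat_space_def unit_row_def)

lemma is_fundamental_matrix_sol_matrix:
  fixes l :: "nat \<Rightarrow> 'a::field_char_0 poly"
  assumes "poly (l r) \<alpha> \<noteq> 0" "r \<le> Suc d1"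
  shows "is_fundamental_matrix r l \<alpha> d1 (sol_matrix r (op_at l \<alpha>) d1)"
  unfolding is_fundamental_matrix_def
proof (intro conjI allI impI)
  show "sol_matrix r (op_at l \<alpha>) d1 \<in> fmat_space r d1"
    unfolding fmat_space_def sol_matrix_def using assms(2) by (auto simp: fps_op_sol_init unit_row_def)
  fix i assume "i < r"
  show "\<exists>f. op_solution_at r l \<alpha> f \<and> (\<forall>b\<le>d1. f $ b = sol_matrix r (op_at l \<alpha>) d1 i b)"
    by (rule exI[of _ "fps_op_sol r (op_at l \<alpha>) (unit_row i)"])
       (use assms \<open>i < r\<close> in \<open>simp add: op_solution_at_iff fps_op_sol_solves op_at_nth_0 sol_matrix_def\<close>)
qed

lemma is_fundamental_matrix_imp_sol_matrix:
  fixes l :: "nat \<Rightarrow> 'a::field_char_0 poly"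
  assumes nz: "poly (l r) \<alpha> \<noteq> 0" and rd: "r \<le> Suc d1" and F: "is_fundamental_matrix r l \<alpha> d1 M"
  shows "M = sol_matrix r (op_at l \<alpha>) d1"
proof (intro ext)
  fix i b
  have M: "M \<in> fmat_space r d1" using F unfolding is_fundamental_matrix_def by simp
  show "M i b = sol_matrix r (op_at l \<alpha>) d1 i b"
  proof (cases "i < r \<and> b \<le> d1")
    case False
    then show ?thesis using M unfolding fmat_space_def sol_matrix_def by auto
  next
    case True
    then obtain f where f: "op_solution_at r l \<alpha> f" "\<forall>b\<le>d1. f $ b = M i b"
      using F unfolding is_fundamental_matrix_def by blast
    have a0: "op_at l \<alpha> r $ 0 \<noteq> 0" using nz by (simp add: op_at_nth_0)
    have "f $ b = fps_op_sol r (op_at l \<alpha>) (unit_row i) $ b"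
    proof (rule fps_op_eq_imp_nth_eq[of "op_at l \<alpha>" r, OF a0, where K = "Suc b"])
      show "fps_op r (op_at l \<alpha>) f $ n = fps_op r (op_at l \<alpha>) (fps_op_sol r (op_at l \<alpha>) (unit_row i)) $ n" for n
        using f(1) fps_op_sol_solves[of "op_at l \<alpha>" r, OF a0] by (simp add: op_solution_at_iff)
      show "f $ m = fps_op_sol r (op_at l \<alpha>) (unit_row i) $ m" if "m < r" for m
        using that f(2) M rd True by (auto simp: fps_op_sol_init fmat_space_def unit_row_def)
    qed simp
    then show ?thesis using f(2) True by (simp add: sol_matrix_def)
  qed
qed

lemma fundamental_matrix_eq_sol_matrix:
  fixes l :: "nat \<Rightarrow> 'a::field_char_0 poly"
  assumes "poly (l r) \<alpha> \<noteq> 0" "r \<le> Suc d1"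
  shows "fundamental_matrix r l \<alpha> d1 = sol_matrix r (op_at l \<alpha>) d1"
  unfolding fundamental_matrix_def
  using is_fundamental_matrix_sol_matrix[of l r \<alpha> d1, OF assms]
    is_fundamental_matrix_imp_sol_matrix[of l r \<alpha> d1, OF assms]
  by (rule the_equality)

lemma fundamental_matrix_in_fmat_space:
  fixes l :: "nat \<Rightarrow> 'a::field_char_0 poly"
  assumes "poly (l r) \<alpha> \<noteq> 0" "r \<le> Suc d1"
  shows "fundamental_matrix r l \<alpha> d1 \<in> fmat_space r d1"
  using is_fundamental_matrix_sol_matrix[of l r \<alpha> d1, OF assms]
    fundamental_matrix_eq_sol_matrix[of l r \<alpha> d1, OF assms]
  unfolding is_fundamental_matrix_def by simp

text \<open>Since a solution is determined by its first r coefficients, M is the fundamental matrix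
  iff L kills its truncated rows up to order d1 - r.\<close>

lemma fundamental_matrix_eq_iff:
  fixes l :: "nat \<Rightarrow> 'a::field_char_0 poly"
  assumes nz: "poly (l r) \<alpha> \<noteq> 0" and rd: "r \<le> Suc d1" and M: "M \<in> fmat_space r d1"
  shows "fundamental_matrix r l \<alpha> d1 = M \<longleftrightarrow>
    (\<forall>i<r. \<forall>n. n + r \<le> d1 \<longrightarrow> fps_op r (op_at l \<alpha>) (row_fps d1 M i) $ n = 0)"
proof -
  let ?a = "op_at l \<alpha>"
  let ?sol = "\<lambda>i. fps_op_sol r ?a (unit_row i)"
  have a0: "?a r $ 0 \<noteq> 0" using nz by (simp add: op_at_nth_0)
  have sol: "fps_op r ?a (?sol i) = 0" for i using fps_op_sol_solves[of ?a r, OF a0] .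
  show ?thesis unfolding fundamental_matrix_eq_sol_matrix[of l r \<alpha> d1, OF nz rd]
  proof (intro iffI allI impI)
    fix i n assume eq: "sol_matrix r ?a d1 = M" and i: "i < r" and n: "n + r \<le> d1"
    have "fps_op r ?a (row_fps d1 M i) $ n = fps_op r ?a (?sol i) $ n"
      by (rule fps_op_nth_cong) (use n i in \<open>auto simp: row_fps_def eq[symmetric] sol_matrix_def\<close>)
    then show "fps_op r ?a (row_fps d1 M i) $ n = 0" using sol by simp
  next
    assume L: "\<forall>i<r. \<forall>n. n + r \<le> d1 \<longrightarrow> fps_op r ?a (row_fps d1 M i) $ n = 0"
    show "sol_matrix r ?a d1 = M"
    proof (intro ext)
      fix i b
      show "sol_matrix r ?a d1 i b = M i b"
      proof (cases "i < r \<and> b \<le> d1")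
        case False
        then show ?thesis using M unfolding fmat_space_def sol_matrix_def by auto
      next
        case True
        have "row_fps d1 M i $ b = ?sol i $ b"
        proof (rule fps_op_eq_imp_nth_eq[of "op_at l \<alpha>" r, OF a0, where K = "Suc d1 - r"])
          show "fps_op r ?a (row_fps d1 M i) $ n = fps_op r ?a (?sol i) $ n" if "n < Suc d1 - r" for n
            using L True that sol by auto
          show "row_fps d1 M i $ m = ?sol i $ m" if "m < r" for m
            using that M rd True by (auto simp: fps_op_sol_init fmat_space_def unit_row_def row_fps_def)
          show "b < Suc d1 - r + r" using True rd by simp
        qed
        then show ?thesis using True by (simp add: sol_matrix_def row_fps_def)
      qed
    qed
  qed
qed

section \<open>The unitriangular system for monic operators\<close>

lemma fps_nth_sum_ops:
  "(\<Sum>j<r. (e j :: 'a::field_char_0 fps) * (fps_deriv ^^ j) p) $ n =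
     (\<Sum>j<r. e j $ n * ((fps_deriv ^^ j) p) $ 0) + (\<Sum>j<r. \<Sum>k<n. e j $ k * ((fps_deriv ^^ j) p) $ (n - k))"
proof -
  have "(f * g) $ n = f $ n * g $ 0 + (\<Sum>k<n. f $ k * g $ (n - k))" for f g :: "'a fps"
    unfolding fps_mult_nth atLeast0AtMost lessThan_Suc_atMost[symmetric] sum.lessThan_Suc
    by (simp add: add.commute)
  then show ?thesis by (simp add: fps_sum_nth sum.distrib)
qed

lemma sum_ops_unit_row_nth_0:
  assumes "i < r" "\<And>j. j < r \<Longrightarrow> p $ j = unit_row i j"
  shows "(\<Sum>j<r. (e j :: 'a::field_char_0 fps) $ n * ((fps_deriv ^^ j) p) $ 0) = e i $ n * fact i"
proof -
  have "(\<Sum>j<r. e j $ n * ((fps_deriv ^^ j) p) $ 0) = (\<Sum>j<r. if j = i then e i $ n * fact i else 0)"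
    using assms(2) by (intro sum.cong refl) (simp add: fps_nth_deriv_funpow pochhammer_fact unit_row_def)
  then show ?thesis using assms(1) by simp
qed

text \<open>If the rows p i start with the identity matrix, the n-th coefficient of the i-th equation
  is fact i * \<delta> i $ n plus terms in lower coefficients of \<delta>.\<close>

lemma sum_ops_rows_vanish_iff:
  assumes P: "\<And>i j. i < r \<Longrightarrow> j < r \<Longrightarrow> p i $ j = unit_row i j"
  shows "(\<forall>i<r. \<forall>n<K. (\<Sum>j<r. (\<delta> j :: 'a::field_char_0 fps) * (fps_deriv ^^ j) (p i)) $ n = 0) \<longleftrightarrow>
         (\<forall>j<r. \<forall>n<K. \<delta> j $ n = 0)"
proof (intro iffI allI impI)
  fix j n
  assume Z: "\<forall>i<r. \<forall>n<K. (\<Sum>j<r. \<delta> j * (fps_deriv ^^ j) (p i)) $ n = 0"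
  show "j < r \<Longrightarrow> n < K \<Longrightarrow> \<delta> j $ n = 0"
  proof (induction n arbitrary: j rule: less_induct)
    case (less n)
    have "(\<Sum>j'<r. \<Sum>k<n. \<delta> j' $ k * ((fps_deriv ^^ j') (p j)) $ (n - k)) = 0"
      using less by (intro sum.neutral ballI) (auto intro!: sum.neutral)
    then have "(\<Sum>j'<r. \<delta> j' * (fps_deriv ^^ j') (p j)) $ n = \<delta> j $ n * fact j"
      unfolding fps_nth_sum_ops using sum_ops_unit_row_nth_0[of j r "p j" \<delta> n] P less.prems by simp
    then show ?case using Z less.prems by simp
  qed
next
  fix i n
  assume "\<forall>j<r. \<forall>n<K. \<delta> j $ n = 0" and "i < r" "n < K"
  then show "(\<Sum>j<r. \<delta> j * (fps_deriv ^^ j) (p i)) $ n = 0"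
    unfolding fps_sum_nth fps_mult_nth by (intro sum.neutral ballI) auto
qed

text \<open>The lower coefficients of the monic operator annihilating p 0, ..., p (r - 1), computed
  coefficient by coefficient.\<close>

definition monic_coeffs_step ::
  "nat \<Rightarrow> (nat \<Rightarrow> 'a fps) \<Rightarrow> nat \<Rightarrow> (nat \<Rightarrow> nat \<Rightarrow> 'a) \<Rightarrow> nat \<Rightarrow> 'a::field_char_0" where
  "monic_coeffs_step r p n u i = (if i < r then
      - (((fps_deriv ^^ r) (p i)) $ n + (\<Sum>j<r. \<Sum>k<n. u k j * ((fps_deriv ^^ j) (p i)) $ (n - k))) / fact i
     else 0)"

definition monic_coeffs :: "nat \<Rightarrow> (nat \<Rightarrow> 'a::field_char_0 fps) \<Rightarrow> nat \<Rightarrow> 'a fps" where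
  "monic_coeffs r p j = Abs_fps (\<lambda>k. cov_rec (monic_coeffs_step r p) k j)"

lemma monic_coeffs_nth: "monic_coeffs r p i $ n = monic_coeffs_step r p n (\<lambda>k j. monic_coeffs r p j $ k) i"
proof -
  have "cov_rec (monic_coeffs_step r p) n = monic_coeffs_step r p n (cov_rec (monic_coeffs_step r p))"
  proof (rule cov_rec_unfold)
    fix n and u w :: "nat \<Rightarrow> nat \<Rightarrow> 'a"
    assume "\<And>m. m < n \<Longrightarrow> u m = w m"
    then show "monic_coeffs_step r p n u = monic_coeffs_step r p n w"
      unfolding monic_coeffs_step_def by (intro ext arg_cong2[where f = "(/)"] arg_cong[where f = uminus]
          arg_cong2[where f = "(+)"] sum.cong refl) auto
  qed
  then show ?thesis unfolding monic_coeffs_def by simp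
qed

lemma monic_coeffs_solve:
  assumes P: "\<And>i j. i < r \<Longrightarrow> j < r \<Longrightarrow> p i $ j = unit_row i j" and i: "i < r"
  shows "(\<Sum>j<r. monic_coeffs r p j * (fps_deriv ^^ j) (p i)) + (fps_deriv ^^ r) (p i) = 0"
proof (rule fps_ext)
  fix n
  let ?e = "monic_coeffs r p"
  have "(\<Sum>j<r. ?e j * (fps_deriv ^^ j) (p i)) $ n =
        ?e i $ n * fact i + (\<Sum>j<r. \<Sum>k<n. ?e j $ k * ((fps_deriv ^^ j) (p i)) $ (n - k))"
    unfolding fps_nth_sum_ops using sum_ops_unit_row_nth_0[of i r "p i" ?e n] P i by simp
  moreover have "?e i $ n * fact i = - (((fps_deriv ^^ r) (p i)) $ n +
      (\<Sum>j<r. \<Sum>k<n. ?e j $ k * ((fps_deriv ^^ j) (p i)) $ (n - k)))"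
    by (subst monic_coeffs_nth) (simp add: monic_coeffs_step_def i)
  ultimately show "((\<Sum>j<r. ?e j * (fps_deriv ^^ j) (p i)) + (fps_deriv ^^ r) (p i)) $ n = 0 $ n"
    by simp
qed

section \<open>Hermite interpolation\<close>

lemma pcompose_power: "pcompose (p ^ n) q = (pcompose p q) ^ n"
  by (induction n) (simp_all add: pcompose_1 pcompose_mult)

lemma pcompose_shift_cancel:
  "pcompose (pcompose h [:\<alpha>, 1:]) [:- \<alpha>, 1:] = (h :: 'a::comm_ring_1 poly)"
  "pcompose (pcompose h [:- \<alpha>, 1:]) [:\<alpha>, 1:] = h"
proof -
  have "pcompose [:\<beta>, 1:] [:- \<beta>, 1:] = [:0, 1:]" for \<beta> :: 'a by (simp add: pcompose_pCons)
  from this[of \<alpha>] this[of "- \<alpha>"] show "pcompose (pcompose h [:\<alpha>, 1:]) [:- \<alpha>, 1:] = h"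
      "pcompose (pcompose h [:- \<alpha>, 1:]) [:\<alpha>, 1:] = h"
    by (simp_all add: pcompose_assoc[symmetric])
qed

lemma coeff_pcompose_shift_eq_0_iff_dvd:
  "(\<forall>n<N. coeff (pcompose h [:\<alpha>, 1:]) n = 0) \<longleftrightarrow> [:- \<alpha>, 1:] ^ N dvd (h :: 'a::field poly)"
proof -
  have shift_monom: "pcompose (monom 1 N * w) [:- \<alpha>, 1:] = [:- \<alpha>, 1:] ^ N * pcompose w [:- \<alpha>, 1:]"
      "pcompose ([:- \<alpha>, 1:] ^ N * w) [:\<alpha>, 1:] = monom 1 N * pcompose w [:\<alpha>, 1:]" for w :: "'a poly"
    by (simp_all add: pcompose_mult monom_altdef pcompose_power pcompose_pCons)
  have "monom 1 N dvd pcompose h [:\<alpha>, 1:] \<longleftrightarrow> [:- \<alpha>, 1:] ^ N dvd h"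
  proof
    assume "monom 1 N dvd pcompose h [:\<alpha>, 1:]"
    then obtain w where "pcompose h [:\<alpha>, 1:] = monom 1 N * w" by (elim dvdE)
    then have "h = [:- \<alpha>, 1:] ^ N * pcompose w [:- \<alpha>, 1:]"
      using pcompose_shift_cancel(1)[of h \<alpha>] shift_monom(1) by simp
    then show "[:- \<alpha>, 1:] ^ N dvd h" by (rule dvdI)
  next
    assume "[:- \<alpha>, 1:] ^ N dvd h"
    then obtain w where "h = [:- \<alpha>, 1:] ^ N * w" by (elim dvdE)
    then show "monom 1 N dvd pcompose h [:\<alpha>, 1:]" using shift_monom(2) by simp
  qed
  then show ?thesis by (simp add: monom_1_dvd_iff')
qed

lemma fps_mult_nth_cong_left:
  assumes "\<And>k. k \<le> n \<Longrightarrow> f $ k = f' $ k"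
  shows "(f * g) $ n = (f' * g) $ n"
  unfolding fps_mult_nth using assms by (intro sum.cong refl) auto

text \<open>A polynomial not vanishing at \<beta> is invertible modulo (x - \<beta>)^N: truncate the inverse of its
  Taylor series at \<beta>.\<close>

lemma inverse_mod_linear_power:
  fixes Pr :: "'a::field poly"
  assumes "poly Pr \<beta> \<noteq> 0"
  shows "\<exists>u. [:- \<beta>, 1:] ^ N dvd (u * Pr - 1)"
proof -
  define \<pi> where "\<pi> = fps_of_poly (pcompose Pr [:\<beta>, 1:])"
  have ip: "inverse \<pi> * \<pi> = 1" using assms by (intro inverse_mult_eq_1) (simp add: \<pi>_def)
  define W where "W = (\<Sum>n<N. monom (inverse \<pi> $ n) n)"
  have W: "coeff W k = inverse \<pi> $ k" if "k < N" for k using that by (simp add: W_def coeff_sum)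
  define u where "u = pcompose W [:- \<beta>, 1:]"
  have "coeff (pcompose (u * Pr - 1) [:\<beta>, 1:]) n = 0" if n: "n < N" for n
  proof -
    have "pcompose (u * Pr - 1) [:\<beta>, 1:] = W * pcompose Pr [:\<beta>, 1:] - 1"
      by (simp add: u_def pcompose_diff pcompose_mult pcompose_1 pcompose_shift_cancel)
    then have "coeff (pcompose (u * Pr - 1) [:\<beta>, 1:]) n = (fps_of_poly W * \<pi>) $ n - (1::'a fps) $ n"
      by (simp add: \<pi>_def fps_of_poly_mult[symmetric] del: fps_of_poly_mult)
    also have "(fps_of_poly W * \<pi>) $ n = (inverse \<pi> * \<pi>) $ n"
      by (rule fps_mult_nth_cong_left) (use n W in auto)
    finally show ?thesis using ip by simp
  qed
  then show ?thesis using coeff_pcompose_shift_eq_0_iff_dvd by blast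
qed

lemma chinese_remainder_linear_powers:
  fixes \<alpha> :: "nat \<Rightarrow> 'a::field"
  assumes "inj_on \<alpha> {..<s}"
  shows "\<exists>q. \<forall>i<s. [:- \<alpha> i, 1:] ^ N dvd (q - T i)"
  using assms
proof (induction s)
  case 0 then show ?case by simp
next
  case (Suc s)
  then obtain q where q: "\<forall>i<s. [:- \<alpha> i, 1:] ^ N dvd (q - T i)"
    using inj_on_subset[of \<alpha> "{..<Suc s}" "{..<s}"] by auto
  define Pr where "Pr = (\<Prod>i<s. [:- \<alpha> i, 1:] ^ N)"
  have "poly Pr (\<alpha> s) = (\<Prod>i<s. (\<alpha> s - \<alpha> i) ^ N)" unfolding Pr_def by (simp add: poly_prod)
  moreover have "\<alpha> s - \<alpha> i \<noteq> 0" if "i < s" for i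
    using Suc.prems that by (auto dest: inj_onD)
  ultimately have "poly Pr (\<alpha> s) \<noteq> 0" by simp
  then obtain u where u: "[:- \<alpha> s, 1:] ^ N dvd (u * Pr - 1)" using inverse_mod_linear_power by blast
  define q' where "q' = q + u * Pr * (T s - q)"
  have "[:- \<alpha> i, 1:] ^ N dvd (q' - T i)" if "i < Suc s" for i
  proof (cases "i = s")
    case True
    have "q' - T i = (u * Pr - 1) * (T s - q)"
      unfolding q'_def True by (simp add: algebra_simps)
    then show ?thesis using u True by (simp add: dvd_mult2)
  next
    case False
    then have i: "i < s" using that by simp
    have "[:- \<alpha> i, 1:] ^ N dvd Pr" unfolding Pr_def using i by (intro dvd_prodI) auto
    then have "[:- \<alpha> i, 1:] ^ N dvd (q - T i) + u * Pr * (T s - q)"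
      using q i by (intro dvd_add) auto
    then show ?thesis unfolding q'_def by (simp add: algebra_simps)
  qed
  then show ?case by blast
qed

lemma degree_prod_linear_powers:
  "degree (\<Prod>i<s. [:- (\<alpha> i :: 'a::field), 1:] ^ N) = s * N"
  by (subst degree_prod_eq_sum_degree) (auto simp: degree_power_eq)

lemma hermite_interpolation:
  fixes \<alpha> :: "nat \<Rightarrow> 'a::field_char_0" and E :: "nat \<Rightarrow> 'a fps"
  assumes inj: "inj_on \<alpha> {..<s}" and sN: "0 < s * N"
  shows "\<exists>q. (\<forall>i<s. \<forall>n<N. coeff (pcompose q [:\<alpha> i, 1:]) n = E i $ n) \<and> degree q < s * N"
proof -
  define T where "T i = pcompose (\<Sum>n<N. monom (E i $ n) n) [:- \<alpha> i, 1:]" for i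
  define Pr where "Pr = (\<Prod>i<s. [:- \<alpha> i, 1:] ^ N)"
  obtain q where q: "\<forall>i<s. [:- \<alpha> i, 1:] ^ N dvd (q - T i)"
    using chinese_remainder_linear_powers[OF inj] by blast
  have "coeff (pcompose (q mod Pr) [:\<alpha> i, 1:]) n = E i $ n" if i: "i < s" and n: "n < N" for i n
  proof -
    have "[:- \<alpha> i, 1:] ^ N dvd Pr" unfolding Pr_def using i by (intro dvd_prodI) auto
    moreover have "[:- \<alpha> i, 1:] ^ N dvd (q - T i)" using q i by blast
    ultimately have "[:- \<alpha> i, 1:] ^ N dvd (q - T i) - Pr * (q div Pr)"
      by (metis dvd_diff dvd_mult2)
    also have "(q - T i) - Pr * (q div Pr) = q mod Pr - T i"
      by (simp add: minus_mult_div_eq_mod[symmetric] algebra_simps)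
    finally have "coeff (pcompose (q mod Pr - T i) [:\<alpha> i, 1:]) n = 0"
      using n coeff_pcompose_shift_eq_0_iff_dvd by blast
    then have "coeff (pcompose (q mod Pr) [:\<alpha> i, 1:]) n = coeff (pcompose (T i) [:\<alpha> i, 1:]) n"
      by (simp add: pcompose_diff)
    also have "\<dots> = E i $ n" using n by (simp add: T_def pcompose_shift_cancel coeff_sum)
    finally show ?thesis .
  qed
  moreover have "degree (q mod Pr) < s * N"
    using degree_mod_less[of Pr q] sN unfolding Pr_def degree_prod_linear_powers by auto
  ultimately show ?thesis by blast
qed

section \<open>Surjectivity\<close>

definition op_space :: "nat \<Rightarrow> nat \<Rightarrow> (nat \<Rightarrow> 'a::field_char_0) \<Rightarrow> nat \<Rightarrow> (nat \<Rightarrow> 'a poly) set" where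
  "op_space r d \<alpha> s = {l. op_order l r \<and> op_degree_le l d \<and> (\<forall>i<s. poly (l r) (\<alpha> i) \<noteq> 0)}"

lemma phi_map_eq_iff:
  assumes "M \<in> fmat_power r d1 s"
  shows "phi_map r d1 \<alpha> s l = M \<longleftrightarrow> (\<forall>i<s. fundamental_matrix r l (\<alpha> i) d1 = M i)"
  using assms unfolding fmat_power_def phi_map_def by (auto simp: fun_eq_iff)

lemma phi_map_in_fmat_power:
  fixes \<alpha> :: "nat \<Rightarrow> 'a::field_char_0"
  assumes "l \<in> op_space r d \<alpha> s" "r \<le> Suc d1"
  shows "phi_map r d1 \<alpha> s l \<in> fmat_power r d1 s"
  using assms fundamental_matrix_in_fmat_space[of l r _ d1]
  unfolding fmat_power_def phi_map_def op_space_def by simp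

lemma fundamental_matrix_monic:
  fixes l :: "nat \<Rightarrow> 'a::field_char_0 poly"
  assumes l1: "l r = 1" and rd: "r \<le> Suc d1" and M: "M \<in> fmat_space r d1"
    and taylor: "\<And>j n. j < r \<Longrightarrow> n < Suc d1 - r \<Longrightarrow>
      coeff (pcompose (l j) [:\<alpha>, 1:]) n = monic_coeffs r (row_fps d1 M) j $ n"
  shows "fundamental_matrix r l \<alpha> d1 = M"
proof -
  have "poly (l r) \<alpha> \<noteq> 0" using l1 by simp
  moreover have "fps_op r (op_at l \<alpha>) (row_fps d1 M i) $ n = 0" if i: "i < r" and n: "n + r \<le> d1"
    for i n
  proof -
    let ?p = "row_fps d1 M" and ?e = "monic_coeffs r (row_fps d1 M)"
    have "(op_at l \<alpha> j * (fps_deriv ^^ j) (?p i)) $ n = (?e j * (fps_deriv ^^ j) (?p i)) $ n"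
      if "j < r" for j
      by (rule fps_mult_nth_cong_left) (use that taylor n in \<open>auto simp: op_at_def\<close>)
    then have "fps_op r (op_at l \<alpha>) (?p i) $ n =
        ((\<Sum>j<r. ?e j * (fps_deriv ^^ j) (?p i)) + (fps_deriv ^^ r) (?p i)) $ n"
      unfolding fps_op_split_last by (simp add: op_at_def l1 pcompose_1 fps_sum_nth)
    also have "\<dots> = 0"
      using monic_coeffs_solve[OF row_fps_nth_unit_row[OF M rd] i] by simp
    finally show ?thesis .
  qed
  ultimately show ?thesis using fundamental_matrix_eq_iff[of l r \<alpha> d1, OF _ rd M] by blast
qed

text \<open>Prescribe the Taylor coefficients of the lower coefficients of a monic operator at every
  \<alpha> i by Hermite interpolation; the degree bound is where d \<ge> s (r s + 1 - r) is needed.\<close>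

lemma phi_map_surj_monic:
  fixes \<alpha> :: "nat \<Rightarrow> 'a::field_char_0"
  assumes inj: "inj_on \<alpha> {..<s}" and Ms: "Ms \<in> fmat_power r (r * s) s"
    and sN: "s * (Suc (r * s) - r) \<le> d" and s0: "0 < s"
  shows "\<exists>l\<in>op_space r d \<alpha> s. l r = 1 \<and> phi_map r (r * s) \<alpha> s l = Ms"
proof -
  define N where "N = Suc (r * s) - r"
  have rs: "r \<le> r * s" using s0 by (cases s) auto
  have rd: "r \<le> Suc (r * s)" using rs by linarith
  have "0 < N" using rs unfolding N_def by linarith
  then have N0: "0 < s * N" using s0 by simp
  have Msi: "Ms i \<in> fmat_space r (r * s)" if "i < s" for i
    using Ms that unfolding fmat_power_def by simp
  define e where "e i = monic_coeffs r (row_fps (r * s) (Ms i))" for i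
  have "\<forall>j. \<exists>q. (\<forall>i<s. \<forall>n<N. coeff (pcompose q [:\<alpha> i, 1:]) n = e i j $ n) \<and> degree q < s * N"
    by (rule allI, rule hermite_interpolation[OF inj N0])
  from choice[OF this] obtain Q where "\<forall>j. (\<forall>i<s. \<forall>n<N. coeff (pcompose (Q j) [:\<alpha> i, 1:]) n = e i j $ n)
      \<and> degree (Q j) < s * N"
    by blast
  then have Q: "\<And>j i n. i < s \<Longrightarrow> n < N \<Longrightarrow> coeff (pcompose (Q j) [:\<alpha> i, 1:]) n = e i j $ n"
      "\<And>j. degree (Q j) < s * N"
    by blast+
  define l where "l j = (if j < r then Q j else if j = r then 1 else 0)" for j
  have "l \<in> op_space r d \<alpha> s"
    unfolding op_space_def op_order_def op_degree_le_def
  proof (intro CollectI conjI allI impI)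
    fix j
    show "degree (l j) \<le> d" using Q(2)[of j] sN unfolding l_def N_def by auto
  qed (auto simp: l_def)
  moreover have "fundamental_matrix r l (\<alpha> i) (r * s) = Ms i" if "i < s" for i
    by (rule fundamental_matrix_monic[OF _ rd Msi[OF that]])
       (use Q(1) that in \<open>simp_all add: l_def e_def N_def\<close>)
  moreover have "l r = 1" by (simp add: l_def)
  ultimately show ?thesis using phi_map_eq_iff[OF Ms, of \<alpha> l] by (intro bexI[of _ l]) auto
qed

section \<open>The fibers\<close>

lemma op_at_diff_mult:
  "op_at (\<lambda>j. l j - l r * E j) \<alpha> j = op_at l \<alpha> j - op_at l \<alpha> r * op_at E \<alpha> j"
  by (simp add: op_at_def pcompose_diff pcompose_mult fps_of_poly_diff fps_of_poly_mult)

lemma fps_op_monic_decomp: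
  assumes "e r = 1"
  shows "fps_op r a f = (\<Sum>j<r. (a j - a r * e j) * (fps_deriv ^^ j) f) + a r * fps_op r e f"
  unfolding fps_op_split_last assms
  by (simp add: sum_subtractf algebra_simps sum_distrib_left)

lemma fundamental_matrix_eq_iff_dvd:
  fixes l E :: "nat \<Rightarrow> 'a::field_char_0 poly"
  assumes nz: "poly (l r) \<alpha> \<noteq> 0" and E1: "E r = 1" and rd: "r \<le> Suc d1"
    and M: "M \<in> fmat_space r d1" and FE: "fundamental_matrix r E \<alpha> d1 = M"
  shows "fundamental_matrix r l \<alpha> d1 = M \<longleftrightarrow>
    (\<forall>j<r. [:- \<alpha>, 1:] ^ (Suc d1 - r) dvd (l j - l r * E j))"
proof -
  let ?N = "Suc d1 - r"
  let ?a = "op_at l \<alpha>" and ?e = "op_at E \<alpha>" and ?p = "row_fps d1 M"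
  define \<delta> where "\<delta> j = op_at (\<lambda>j. l j - l r * E j) \<alpha> j" for j
  have e1: "?e r = 1" using E1 by (simp add: op_at_def pcompose_1)
  have EL: "\<forall>i<r. \<forall>n. n + r \<le> d1 \<longrightarrow> fps_op r ?e (?p i) $ n = 0"
    using FE fundamental_matrix_eq_iff[of E r \<alpha> d1 M, OF _ rd M] E1 by simp
  have nN: "n + r \<le> d1 \<longleftrightarrow> n < ?N" for n using rd by auto
  have "fps_op r ?a (?p i) $ n = (\<Sum>j<r. \<delta> j * (fps_deriv ^^ j) (?p i)) $ n"
    if "i < r" "n < ?N" for i n
  proof -
    have "(?a r * fps_op r ?e (?p i)) $ n = 0"
      unfolding fps_mult_nth using EL that nN by (intro sum.neutral) auto
    then show ?thesis
      unfolding fps_op_monic_decomp[of ?e r ?a "?p i", OF e1] \<delta>_def op_at_diff_mult by simp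
  qed
  then have "fundamental_matrix r l \<alpha> d1 = M \<longleftrightarrow>
        (\<forall>i<r. \<forall>n<?N. (\<Sum>j<r. \<delta> j * (fps_deriv ^^ j) (?p i)) $ n = 0)"
    unfolding fundamental_matrix_eq_iff[of l r \<alpha> d1 M, OF nz rd M] using nN by auto
  also have "\<dots> \<longleftrightarrow> (\<forall>j<r. \<forall>n<?N. \<delta> j $ n = 0)"
    by (rule sum_ops_rows_vanish_iff) (rule row_fps_nth_unit_row[OF M rd])
  also have "\<dots> \<longleftrightarrow> (\<forall>j<r. [:- \<alpha>, 1:] ^ ?N dvd (l j - l r * E j))"
    unfolding \<delta>_def op_at_def fps_of_poly_nth coeff_pcompose_shift_eq_0_iff_dvd[symmetric] by simp
  finally show ?thesis .
qed

lemma phi_map_eq_iff_dvd: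
  fixes \<alpha> :: "nat \<Rightarrow> 'a::field_char_0"
  assumes M: "M \<in> fmat_power r (r * s) s" and rd: "r \<le> Suc (r * s)"
    and E: "E r = 1" "phi_map r (r * s) \<alpha> s E = M"
    and l: "l \<in> op_space r d \<alpha> s"
  shows "phi_map r (r * s) \<alpha> s l = M \<longleftrightarrow>
    (\<forall>i<s. \<forall>j<r. [:- \<alpha> i, 1:] ^ (Suc (r * s) - r) dvd (l j - l r * E j))"
proof -
  have "fundamental_matrix r l (\<alpha> i) (r * s) = M i \<longleftrightarrow>
        (\<forall>j<r. [:- \<alpha> i, 1:] ^ (Suc (r * s) - r) dvd (l j - l r * E j))" if "i < s" for i
  proof (rule fundamental_matrix_eq_iff_dvd[of l r "\<alpha> i" E "r * s" "M i", OF _ E(1) rd])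
    show "poly (l r) (\<alpha> i) \<noteq> 0" using l that unfolding op_space_def by blast
    show "M i \<in> fmat_space r (r * s)" using M that unfolding fmat_power_def by blast
    show "fundamental_matrix r E (\<alpha> i) (r * s) = M i" using E(2) M that phi_map_eq_iff by blast
  qed
  then show ?thesis unfolding phi_map_eq_iff[OF M] by blast
qed

lemma length_op_coords: "length (op_coords r d l) = Suc r * Suc d"
  unfolding op_coords_def by (subst length_concat_map_upt[where w = "Suc d"]) auto

lemma nth_op_coords:
  assumes "k < Suc r * Suc d"
  shows "op_coords r d l ! k = coeff (l (k div Suc d)) (k mod Suc d)"
  unfolding op_coords_def
  by (subst nth_concat_map_upt[where w = "Suc d"]) (use assms in \<open>simp_all del: upt_Suc\<close>)

lemma op_coord_index:
  assumes "j \<le> r" "t \<le> d"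
  shows "j * Suc d + t < Suc r * Suc d" "(j * Suc d + t) div Suc d = j" "(j * Suc d + t) mod Suc d = t"
proof -
  have "j * Suc d + t < Suc j * Suc d" using assms by simp
  also have "\<dots> \<le> Suc r * Suc d" using assms by (intro mult_le_mono1) simp
  finally show "j * Suc d + t < Suc r * Suc d" .
  have e: "j * Suc d + t = t + Suc d * j" by (simp only: add.commute mult.commute)
  have t: "t < Suc d" using assms by simp
  show "(j * Suc d + t) div Suc d = j" unfolding e using t div_mult_self2[of "Suc d" t j] by simp
  show "(j * Suc d + t) mod Suc d = t" unfolding e using t by (simp only: mod_mult_self2 mod_less)
qed

definition op_of_coords :: "nat \<Rightarrow> nat \<Rightarrow> 'a::comm_ring_1 list \<Rightarrow> nat \<Rightarrow> 'a poly" where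
  "op_of_coords r d xs = (\<lambda>j. if j \<le> r then (\<Sum>k\<le>d. monom (xs ! (j * Suc d + k)) k) else 0)"

lemma coeff_op_of_coords:
  "coeff (op_of_coords r d xs j) t = (if j \<le> r \<and> t \<le> d then xs ! (j * Suc d + t) else 0)"
  unfolding op_of_coords_def by (auto simp: coeff_sum coeff_monom)

lemma op_degree_le_op_of_coords: "op_degree_le (op_of_coords r d xs) d"
  unfolding op_degree_le_def by (auto intro!: degree_le simp: coeff_op_of_coords)

lemma op_of_coords_op_coords:
  assumes "op_degree_le l d" "\<forall>j>r. l j = 0"
  shows "op_of_coords r d (op_coords r d l) = l"
proof (intro ext poly_eqI)
  fix j t
  show "coeff (op_of_coords r d (op_coords r d l) j) t = coeff (l j) t"
  proof (cases "j \<le> r \<and> t \<le> d")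
    case True
    then show ?thesis using op_coord_index[of j r t d] by (simp add: coeff_op_of_coords nth_op_coords)
  next
    case False
    have "coeff (l j) t = 0"
    proof (cases "j \<le> r")
      case True
      then have "degree (l j) < t"
        using False assms(1) unfolding op_degree_le_def by (meson le_less_trans not_le)
      then show ?thesis by (rule coeff_eq_0)
    qed (use assms(2) in auto)
    then show ?thesis by (simp only: coeff_op_of_coords if_not_P[OF False])
  qed
qed

lemma op_coords_op_of_coords:
  assumes "length xs = Suc r * Suc d"
  shows "op_coords r d (op_of_coords r d xs) = xs"
proof (rule nth_equalityI)
  show "length (op_coords r d (op_of_coords r d xs)) = length xs" using assms by (simp add: length_op_coords)
  fix k assume "k < length (op_coords r d (op_of_coords r d xs))"
  then have k: "k < Suc r * Suc d" by (simp add: length_op_coords)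
  have "k div Suc d < Suc r" using k by (rule less_mult_imp_div_less)
  moreover have "k mod Suc d \<le> d" by (simp add: less_Suc_eq_le)
  moreover have "k div Suc d * Suc d + k mod Suc d = k" by (rule div_mult_mod_eq)
  ultimately show "op_coords r d (op_of_coords r d xs) ! k = xs ! k"
    using k by (simp only: nth_op_coords[OF k] coeff_op_of_coords less_Suc_eq_le if_True conj_absorb simp_thms)
qed

lemma op_of_coords_op_coords_op_space:
  "l \<in> op_space r d \<alpha> s \<Longrightarrow> op_of_coords r d (op_coords r d l) = l"
  by (rule op_of_coords_op_coords) (auto simp: op_space_def op_order_def)

text \<open>Q will be the product of the (x - \<alpha> i)^N, so that the shift preserves the divisibility
  conditions cutting out the fibers.\<close>

definition fiber_shift ::
  "nat \<Rightarrow> 'a::field poly \<Rightarrow> (nat \<Rightarrow> 'a poly) \<Rightarrow> (nat \<Rightarrow> 'a poly) \<Rightarrow> (nat \<Rightarrow> 'a poly) \<Rightarrow> nat \<Rightarrow> 'a poly"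
  where "fiber_shift r Q E E' l = (\<lambda>j. if j < r then l j - (l r * E j) mod Q + (l r * E' j) mod Q else l j)"

lemma fiber_shift_inverse: "fiber_shift r Q E' E (fiber_shift r Q E E' l) = l"
  by (rule ext) (simp add: fiber_shift_def)

lemma fiber_shift_in_op_space:
  assumes "l \<in> op_space r d \<alpha> s" "Q \<noteq> 0" "degree Q \<le> d"
  shows "fiber_shift r Q E E' l \<in> op_space r d \<alpha> s"
proof -
  have "degree (x mod Q) \<le> d" for x
    using degree_mod_less[OF assms(2), of x] assms(3) by auto
  then have "degree (l j - (l r * E j) mod Q + (l r * E' j) mod Q) \<le> d" for j
    using assms(1) unfolding op_space_def op_degree_le_def by (intro degree_add_le degree_diff_le) auto
  then show ?thesis
    using assms(1) unfolding op_space_def op_order_def op_degree_le_def by (auto simp: fiber_shift_def)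
qed

lemma dvd_fiber_shift_diff:
  fixes Q :: "'a::field poly"
  assumes "D dvd Q" "D dvd (l j - l r * E j)" "j < r"
  shows "D dvd (fiber_shift r Q E E' l j - fiber_shift r Q E E' l r * E' j)"
proof -
  have "fiber_shift r Q E E' l j - fiber_shift r Q E E' l r * E' j =
        (l j - l r * E j) + Q * ((l r * E j) div Q) - Q * ((l r * E' j) div Q)"
    using assms(3) by (simp add: fiber_shift_def minus_mod_eq_mult_div[symmetric] algebra_simps)
  then show ?thesis using assms(1,2) by (metis dvd_add dvd_diff dvd_mult2)
qed

lemma phi_map_fiber_shift:
  fixes \<alpha> :: "nat \<Rightarrow> 'a::field_char_0"
  assumes rd: "r \<le> Suc (r * s)"
    and M: "M \<in> fmat_power r (r * s) s" and M': "M' \<in> fmat_power r (r * s) s"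
    and E: "E r = 1" "phi_map r (r * s) \<alpha> s E = M"
    and E': "E' r = 1" "phi_map r (r * s) \<alpha> s E' = M'"
    and Q: "Q \<noteq> 0" "degree Q \<le> d" "\<And>i. i < s \<Longrightarrow> [:- \<alpha> i, 1:] ^ (Suc (r * s) - r) dvd Q"
    and l: "l \<in> op_space r d \<alpha> s" "phi_map r (r * s) \<alpha> s l = M"
  shows "phi_map r (r * s) \<alpha> s (fiber_shift r Q E E' l) = M'"
proof -
  have "\<forall>i<s. \<forall>j<r. [:- \<alpha> i, 1:] ^ (Suc (r * s) - r) dvd (l j - l r * E j)"
    using phi_map_eq_iff_dvd[OF M rd E l(1)] l(2) by blast
  then have "\<forall>i<s. \<forall>j<r. [:- \<alpha> i, 1:] ^ (Suc (r * s) - r) dvd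
      (fiber_shift r Q E E' l j - fiber_shift r Q E E' l r * E' j)"
    using dvd_fiber_shift_diff[OF Q(3)] by blast
  then show ?thesis
    using phi_map_eq_iff_dvd[OF M' rd E' fiber_shift_in_op_space[OF l(1) Q(1,2)]] by blast
qed

lemma coeff_op_of_coords_mult_mod:
  fixes Q F :: "'a::field poly"
  shows "coeff ((op_of_coords r d xs r * F) mod Q) m =
         (\<Sum>t\<le>d. xs ! (r * Suc d + t) * coeff ((monom 1 t * F) mod Q) m)"
proof -
  have mod_sum: "(\<Sum>t\<in>A. f t) mod Q = (\<Sum>t\<in>A. f t mod Q)" if "finite A" for A and f :: "nat \<Rightarrow> 'a poly"
    using that by (induction A rule: finite_induct) (simp_all add: poly_mod_add_left)
  have "op_of_coords r d xs r * F = (\<Sum>t\<le>d. smult (xs ! (r * Suc d + t)) (monom 1 t * F))"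
    unfolding op_of_coords_def by (simp add: sum_distrib_right smult_monom_mult)
  then show ?thesis by (simp add: mod_sum mod_smult_left coeff_sum)
qed

lemma polyfun_fiber_shift_coords:
  fixes Q :: "'a::field poly"
  assumes i: "i < Suc r * Suc d"
  shows "polyfun (Suc r * Suc d) (\<lambda>xs. op_coords r d (fiber_shift r Q E E' (op_of_coords r d xs)) ! i)"
proof -
  define j where "j = i div Suc d"
  define m where "m = i mod Suc d"
  have "i div Suc d < Suc r" using i by (rule less_mult_imp_div_less)
  then have jr: "j \<le> r" unfolding j_def by simp
  have md: "m \<le> d" unfolding m_def by (simp add: less_Suc_eq_le)
  have im: "j * Suc d + m = i" unfolding j_def m_def by (rule div_mult_mod_eq)
  have coeff_mod: "polyfun (Suc r * Suc d) (\<lambda>xs. coeff ((op_of_coords r d xs r * F) mod Q) m)" for F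
    unfolding coeff_op_of_coords_mult_mod
    by (intro polyfun_sum pf_mult pf_var pf_const) (auto intro: op_coord_index(1))
  have coeff_jm: "coeff (op_of_coords r d xs j) m = xs ! i" for xs :: "'a list"
    using jr md im by (simp add: coeff_op_of_coords)
  have "op_coords r d (fiber_shift r Q E E' (op_of_coords r d xs)) ! i =
      (if j < r then xs ! i - coeff ((op_of_coords r d xs r * E j) mod Q) m
        + coeff ((op_of_coords r d xs r * E' j) mod Q) m else xs ! i)" for xs
    unfolding nth_op_coords[OF i] j_def[symmetric] m_def[symmetric]
    by (simp add: fiber_shift_def coeff_jm)
  moreover have "polyfun (Suc r * Suc d) (\<lambda>xs. xs ! i - coeff ((op_of_coords r d xs r * E j) mod Q) m
      + coeff ((op_of_coords r d xs r * E' j) mod Q) m)"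
    by (intro pf_add polyfun_diff pf_var[OF i] coeff_mod)
  ultimately show ?thesis using pf_var[OF i] by (cases "j < r") simp_all
qed

lemma poly_automorphism_fiber_shift:
  fixes Q :: "'a::field poly"
  assumes "Q \<noteq> 0" "degree Q \<le> d"
  shows "poly_automorphism (Suc r * Suc d)
    (\<lambda>xs. op_coords r d (fiber_shift r Q E E' (op_of_coords r d xs)))
    (\<lambda>xs. op_coords r d (fiber_shift r Q E' E (op_of_coords r d xs)))"
proof -
  have coords_inverse: "op_of_coords r d (op_coords r d (fiber_shift r Q A B (op_of_coords r d xs))) =
      fiber_shift r Q A B (op_of_coords r d xs)" for A B xs
  proof (rule op_of_coords_op_coords)
    have "degree (x mod Q) \<le> d" for x
      using degree_mod_less[OF assms(1), of x] assms(2) by auto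
    then show "op_degree_le (fiber_shift r Q A B (op_of_coords r d xs)) d"
      using op_degree_le_op_of_coords[of r d xs] unfolding op_degree_le_def fiber_shift_def
      by (auto intro!: degree_add_le degree_diff_le)
  qed (simp add: fiber_shift_def op_of_coords_def)
  have "\<forall>i<Suc r * Suc d.
      polyfun (Suc r * Suc d) (\<lambda>xs. op_coords r d (fiber_shift r Q E E' (op_of_coords r d xs)) ! i) \<and>
      polyfun (Suc r * Suc d) (\<lambda>xs. op_coords r d (fiber_shift r Q E' E (op_of_coords r d xs)) ! i)"
    using polyfun_fiber_shift_coords by blast
  then show ?thesis
    unfolding poly_automorphism_def affine_space_def
    by (simp add: length_op_coords coords_inverse fiber_shift_inverse op_coords_op_of_coords)
qed

definition phi_fiber :: "nat \<Rightarrow> nat \<Rightarrow> (nat \<Rightarrow> 'a::field_char_0) \<Rightarrow> nat \<Rightarrow>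
    (nat \<Rightarrow> nat \<Rightarrow> nat \<Rightarrow> 'a) \<Rightarrow> (nat \<Rightarrow> 'a poly) set" where
  "phi_fiber r d \<alpha> s M = {l \<in> op_space r d \<alpha> s. phi_map r (r * s) \<alpha> s l = M}"

lemma fiber_shift_image:
  fixes \<alpha> :: "nat \<Rightarrow> 'a::field_char_0"
  assumes rd: "r \<le> Suc (r * s)"
    and M: "M \<in> fmat_power r (r * s) s" and M': "M' \<in> fmat_power r (r * s) s"
    and E: "E r = 1" "phi_map r (r * s) \<alpha> s E = M"
    and E': "E' r = 1" "phi_map r (r * s) \<alpha> s E' = M'"
    and Q: "Q \<noteq> 0" "degree Q \<le> d" "\<And>i. i < s \<Longrightarrow> [:- \<alpha> i, 1:] ^ (Suc (r * s) - r) dvd Q"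
  shows "fiber_shift r Q E E' ` phi_fiber r d \<alpha> s M = phi_fiber r d \<alpha> s M'"
proof
  have shift: "fiber_shift r Q A B l \<in> phi_fiber r d \<alpha> s Y"
    if "A r = 1" "phi_map r (r * s) \<alpha> s A = X" "B r = 1" "phi_map r (r * s) \<alpha> s B = Y"
      "X \<in> fmat_power r (r * s) s" "Y \<in> fmat_power r (r * s) s" "l \<in> phi_fiber r d \<alpha> s X" for A B X Y l
  proof -
    have "l \<in> op_space r d \<alpha> s" "phi_map r (r * s) \<alpha> s l = X"
      using that(7) unfolding phi_fiber_def by simp_all
    then show ?thesis
      using phi_map_fiber_shift[OF rd that(5,6,1,2,3,4) Q] fiber_shift_in_op_space[OF _ Q(1,2)]
      unfolding phi_fiber_def by simp
  qed
  show "fiber_shift r Q E E' ` phi_fiber r d \<alpha> s M \<subseteq> phi_fiber r d \<alpha> s M'"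
    using shift[OF E E' M M'] by blast
  show "phi_fiber r d \<alpha> s M' \<subseteq> fiber_shift r Q E E' ` phi_fiber r d \<alpha> s M"
  proof
    fix l assume "l \<in> phi_fiber r d \<alpha> s M'"
    then have "fiber_shift r Q E' E l \<in> phi_fiber r d \<alpha> s M" by (rule shift[OF E' E M' M])
    then show "l \<in> fiber_shift r Q E E' ` phi_fiber r d \<alpha> s M"
      by (rule rev_image_eqI) (simp add: fiber_shift_inverse)
  qed
qed

lemma zdim_fibers_eq:
  fixes \<alpha> :: "nat \<Rightarrow> 'a::field_char_0"
  assumes inj: "inj_on \<alpha> {..<s}" and s0: "0 < s" and sN: "s * (Suc (r * s) - r) \<le> d"
    and M: "M \<in> phi_map r (r * s) \<alpha> s ` op_space r d \<alpha> s"
    and M': "M' \<in> phi_map r (r * s) \<alpha> s ` op_space r d \<alpha> s"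
  shows "zdim (Suc r * Suc d) (op_coords r d ` phi_fiber r d \<alpha> s M) =
         zdim (Suc r * Suc d) (op_coords r d ` phi_fiber r d \<alpha> s M')"
proof -
  have rd: "r \<le> Suc (r * s)" using s0 by (cases s) auto
  have Mp: "M \<in> fmat_power r (r * s) s" and Mp': "M' \<in> fmat_power r (r * s) s"
    using M M' phi_map_in_fmat_power[OF _ rd] by blast+
  obtain E where E: "E r = 1" "phi_map r (r * s) \<alpha> s E = M"
    using phi_map_surj_monic[OF inj Mp sN s0] by blast
  obtain E' where E': "E' r = 1" "phi_map r (r * s) \<alpha> s E' = M'"
    using phi_map_surj_monic[OF inj Mp' sN s0] by blast
  define Q where "Q = (\<Prod>i<s. [:- \<alpha> i, 1:] ^ (Suc (r * s) - r))"
  have Q: "Q \<noteq> 0" "degree Q \<le> d" "\<And>i. i < s \<Longrightarrow> [:- \<alpha> i, 1:] ^ (Suc (r * s) - r) dvd Q"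
    unfolding Q_def degree_prod_linear_powers using sN by (auto intro: dvd_prodI)
  let ?\<tau> = "\<lambda>xs. op_coords r d (fiber_shift r Q E E' (op_of_coords r d xs))"
  have sub: "op_coords r d ` phi_fiber r d \<alpha> s M \<subseteq> affine_space (Suc r * Suc d)"
    by (auto simp: affine_space_def length_op_coords)
  have "?\<tau> ` op_coords r d ` phi_fiber r d \<alpha> s M = op_coords r d ` fiber_shift r Q E E' ` phi_fiber r d \<alpha> s M"
    unfolding image_image
    by (intro image_cong refl) (auto simp: phi_fiber_def dest: op_of_coords_op_coords_op_space)
  also have "\<dots> = op_coords r d ` phi_fiber r d \<alpha> s M'"
    using fiber_shift_image[OF rd Mp Mp' E E' Q] by simp
  finally show ?thesis
    using zdim_image[OF poly_automorphism_fiber_shift[where E = E and E' = E', OF Q(1,2)] sub] by simp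
qed

section \<open>Regularity\<close>

lemma pcompose_monom: "pcompose (monom c t) q = smult c (q ^ t)"
  by (simp add: monom_altdef pcompose_smult pcompose_power pcompose_pCons)

lemma op_at_nth_op_coords:
  fixes y :: "nat \<Rightarrow> 'a::field_char_0 poly"
  assumes "op_degree_le y d" "\<forall>j>r. y j = 0" "j \<le> r"
  shows "op_at y \<alpha> j $ k = (\<Sum>t\<le>d. op_coords r d y ! (j * Suc d + t) * coeff ([:\<alpha>, 1:] ^ t) k)"
proof -
  have "y j = op_of_coords r d (op_coords r d y) j" using op_of_coords_op_coords[OF assms(1,2)] by simp
  also have "\<dots> = (\<Sum>t\<le>d. monom (op_coords r d y ! (j * Suc d + t)) t)"
    using assms(3) by (simp add: op_of_coords_def)
  finally show ?thesis
    unfolding op_at_def fps_of_poly_nth by (simp add: pcompose_sum pcompose_monom coeff_sum)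
qed

lemma ratfun_op_at:
  fixes X :: "(nat \<Rightarrow> 'a::field_char_0 poly) set"
  assumes X: "\<And>y. y \<in> X \<Longrightarrow> op_degree_le y d \<and> (\<forall>j>r. y j = 0)" and j: "j \<le> r"
  shows "ratfun (Suc r * Suc d) (op_coords r d) X (\<lambda>y. op_at y \<alpha> j $ k)"
proof -
  have "polyfun (Suc r * Suc d) (\<lambda>xs. \<Sum>t\<in>{..d}. xs ! (j * Suc d + t) * coeff ([:\<alpha>, 1:] ^ t) k)"
    using op_coord_index(1)[OF j] by (intro polyfun_sum pf_mult pf_var pf_const) auto
  from ratfun_polyfun[OF this, of "op_coords r d" X] show ?thesis
  proof (rule ratfun_cong)
    fix y assume "y \<in> X"
    then show "(\<Sum>t\<in>{..d}. op_coords r d y ! (j * Suc d + t) * coeff ([:\<alpha>, 1:] ^ t) k) = op_at y \<alpha> j $ k"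
      using op_at_nth_op_coords[OF _ _ j, of y d \<alpha> k] X by simp
  qed
qed

text \<open>Every coefficient of the solution is a rational function of the coordinates of L whose
  denominator is a power of l r (\<alpha>), by induction along the recursion of fps_op_sol.\<close>

lemma ratfun_fps_op_sol:
  fixes X :: "(nat \<Rightarrow> 'a::field_char_0 poly) set"
  assumes X: "\<And>y. y \<in> X \<Longrightarrow> op_degree_le y d \<and> (\<forall>j>r. y j = 0)"
    and nz: "\<And>y. y \<in> X \<Longrightarrow> poly (y r) \<alpha> \<noteq> 0"
  shows "ratfun (Suc r * Suc d) (op_coords r d) X (\<lambda>y. fps_op_sol r (op_at y \<alpha>) v $ m)"
proof (induction m rule: less_induct)
  case (less m)
  let ?R = "ratfun (Suc r * Suc d) (op_coords r d) X"
  show ?case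
  proof (cases "m < r")
    case True
    then show ?thesis by (simp add: fps_op_sol_init ratfun_const)
  next
    case False
    define n where "n = m - r"
    have rest: "?R (\<lambda>y. fps_op_rest r (op_at y \<alpha>) (fps_op_sol r (op_at y \<alpha>) v) n)"
      unfolding fps_op_rest_def
    proof (intro ratfun_sum finite_atMost)
      fix j k assume jk: "j \<in> {..r}" "k \<in> {..n}"
      show "?R (\<lambda>y. if j = r \<and> k = 0 then 0 else op_at y \<alpha> j $ k *
               (pochhammer (of_nat (n - k + 1)) j * fps_op_sol r (op_at y \<alpha>) v $ (n - k + j)))"
      proof (cases "j = r \<and> k = 0")
        case False
        moreover have "m = n + r" using \<open>\<not> m < r\<close> by (simp add: n_def)
        ultimately have "n - k + j < m" using jk by auto
        then have "?R (\<lambda>y. op_at y \<alpha> j $ k *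
            (pochhammer (of_nat (n - k + 1)) j * fps_op_sol r (op_at y \<alpha>) v $ (n - k + j)))"
          using jk by (intro ratfun_mult ratfun_const ratfun_op_at[OF X] less.IH) auto
        then show ?thesis by (simp only: False if_False)
      qed (simp add: ratfun_const)
    qed
    have "?R (\<lambda>y. ((- 1) * fps_op_rest r (op_at y \<alpha>) (fps_op_sol r (op_at y \<alpha>) v) n) /
                  (op_at y \<alpha> r $ 0 * pochhammer (of_nat (n + 1)) r))"
    proof (rule ratfun_divide)
      show "?R (\<lambda>y. (- 1) * fps_op_rest r (op_at y \<alpha>) (fps_op_sol r (op_at y \<alpha>) v) n)"
        by (intro ratfun_mult ratfun_const rest)
      show "?R (\<lambda>y. op_at y \<alpha> r $ 0 * pochhammer (of_nat (n + 1)) r)"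
        by (intro ratfun_mult ratfun_const ratfun_op_at[OF X]) auto
      show "op_at y \<alpha> r $ 0 * pochhammer (of_nat (n + 1)) r \<noteq> 0" if "y \<in> X" for y
        using nz[OF that] pochhammer_of_nat_Suc_neq_0[of n r] by (simp add: op_at_nth_0)
    qed
    then show ?thesis
      by (rule ratfun_cong) (subst fps_op_sol_nth[of r _ v m], use False in \<open>simp add: n_def\<close>)
  qed
qed

lemma length_fmat_power_coords_row:
  "length (concat (map (\<lambda>a. map (\<lambda>b. Ms i a b) [r..<Suc d1]) [0..<r])) = r * (Suc d1 - r)"
  by (subst length_concat_map_upt[where w = "Suc d1 - r"]) (auto simp del: upt_Suc)

lemma length_fmat_power_coords: "length (fmat_power_coords r d1 s Ms) = s * (r * (Suc d1 - r))"
  unfolding fmat_power_coords_def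
  by (subst length_concat_map_upt[where w = "r * (Suc d1 - r)"])
     (auto simp: length_fmat_power_coords_row simp del: upt_Suc)

lemma nth_fmat_power_coords:
  assumes k: "k < s * (r * (Suc d1 - r))"
  shows "fmat_power_coords r d1 s Ms ! k =
    Ms (k div (r * (Suc d1 - r))) ((k mod (r * (Suc d1 - r))) div (Suc d1 - r))
       (r + (k mod (r * (Suc d1 - r))) mod (Suc d1 - r))"
proof -
  let ?w = "Suc d1 - r"
  have W0: "0 < r * ?w" using k by (cases "r * ?w = 0") auto
  then have w0: "0 < ?w" by simp
  have km: "k mod (r * ?w) < r * ?w" using W0 by simp
  have "fmat_power_coords r d1 s Ms ! k =
      concat (map (\<lambda>a. map (\<lambda>b. Ms (k div (r * ?w)) a b) [r..<Suc d1]) [0..<r]) ! (k mod (r * ?w))"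
    unfolding fmat_power_coords_def
    by (subst nth_concat_map_upt[where w = "r * ?w"])
       (use k in \<open>simp_all add: length_fmat_power_coords_row del: upt_Suc\<close>)
  also have "\<dots> = map (\<lambda>b. Ms (k div (r * ?w)) ((k mod (r * ?w)) div ?w) b) [r..<Suc d1] ! ((k mod (r * ?w)) mod ?w)"
    by (subst nth_concat_map_upt[where w = "?w"]) (use km in \<open>simp_all add: mult.commute Suc_diff_le\<close>)
  also have "\<dots> = Ms (k div (r * ?w)) ((k mod (r * ?w)) div ?w) (r + (k mod (r * ?w)) mod ?w)"
  proof -
    have "r + (k mod (r * ?w)) mod ?w < Suc d1" using w0 mod_less_divisor[OF w0, of "k mod (r * ?w)"] by linarith
    then show ?thesis using w0 by (simp add: nth_upt del: upt_Suc)
  qed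
  finally show ?thesis .
qed

lemma ratfun_phi_map_coords:
  fixes \<alpha> :: "nat \<Rightarrow> 'a::field_char_0"
  assumes rs: "r \<le> r * s" and k: "k < s * (r * (Suc (r * s) - r))"
  shows "ratfun (Suc r * Suc d) (op_coords r d) (op_space r d \<alpha> s)
    (\<lambda>l. fmat_power_coords r (r * s) s (phi_map r (r * s) \<alpha> s l) ! k)"
proof -
  let ?w = "Suc (r * s) - r"
  define i where "i = k div (r * ?w)"
  define a where "a = (k mod (r * ?w)) div ?w"
  define b where "b = (k mod (r * ?w)) mod ?w"
  have W0: "0 < r * ?w" using k by (cases "r * ?w = 0") auto
  have i: "i < s" unfolding i_def using k by (simp add: less_mult_imp_div_less)
  have a: "a < r" unfolding a_def using W0 by (simp add: less_mult_imp_div_less)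
  have "b < ?w" unfolding b_def using W0 by simp
  then have rb: "r + b \<le> r * s" using rs by linarith
  have rd: "r \<le> Suc (r * s)" using rs by linarith
  have VD: "op_degree_le l d \<and> (\<forall>j>r. l j = 0)" and nzV: "poly (l r) (\<alpha> i) \<noteq> 0"
    if "l \<in> op_space r d \<alpha> s" for l
    using that i unfolding op_space_def op_order_def by blast+
  have "fmat_power_coords r (r * s) s (phi_map r (r * s) \<alpha> s l) ! k =
      fps_op_sol r (op_at l (\<alpha> i)) (unit_row a) $ (r + b)" if "l \<in> op_space r d \<alpha> s" for l
    using fundamental_matrix_eq_sol_matrix[of l r "\<alpha> i" "r * s", OF nzV[OF that] rd] a rb i
    unfolding nth_fmat_power_coords[OF k] i_def[symmetric] a_def[symmetric] b_def[symmetric]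
    by (simp add: phi_map_def sol_matrix_def)
  moreover have "ratfun (Suc r * Suc d) (op_coords r d) (op_space r d \<alpha> s)
      (\<lambda>l. fps_op_sol r (op_at l (\<alpha> i)) (unit_row a) $ (r + b))"
    by (rule ratfun_fps_op_sol) (use VD nzV in auto)
  ultimately show ?thesis by (rule_tac ratfun_cong) auto
qed

lemma zariski_open_affine_space: "zariski_open n (affine_space n :: 'a::comm_ring_1 list set)"
  unfolding zariski_open_def zariski_closed_def
  by (intro conjI subset_refl exI[of _ "{\<lambda>_. 1}"]) (auto intro: pf_const)

lemma regular_phi_map:
  fixes \<alpha> :: "nat \<Rightarrow> 'a::field_char_0"
  assumes s0: "0 < s"
  shows "regular_map (Suc r * Suc d) (s * (r * (r * s + 1 - r))) (op_coords r d) (op_space r d \<alpha> s)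
           (\<lambda>l. fmat_power_coords r (r * s) s (phi_map r (r * s) \<alpha> s l))"
  unfolding regular_map_def
proof (intro conjI ballI allI impI)
  let ?V = "op_space r d \<alpha> s" and ?n = "Suc r * Suc d"
  show "inj_on (op_coords r d) ?V"
    by (rule inj_onI) (metis op_of_coords_op_coords_op_space)
  show "op_coords r d ` ?V \<subseteq> affine_space ?n" by (auto simp: affine_space_def length_op_coords)
  show "(\<lambda>l. fmat_power_coords r (r * s) s (phi_map r (r * s) \<alpha> s l)) ` ?V
      \<subseteq> affine_space (s * (r * (r * s + 1 - r)))"
    by (auto simp: affine_space_def length_fmat_power_coords)
  fix x k assume x: "x \<in> ?V" and k: "k < s * (r * (r * s + 1 - r))"
  have rs: "r \<le> r * s" using s0 by (cases s) auto
  obtain p q where pq: "polyfun ?n p" "polyfun ?n q"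
    "\<forall>y\<in>?V. q (op_coords r d y) \<noteq> 0 \<and>
       fmat_power_coords r (r * s) s (phi_map r (r * s) \<alpha> s y) ! k = p (op_coords r d y) / q (op_coords r d y)"
    using ratfun_phi_map_coords[OF rs, of k d \<alpha>] k unfolding ratfun_def by auto
  show "\<exists>U p q. zariski_open ?n U \<and> op_coords r d x \<in> U \<and> polyfun ?n p \<and> polyfun ?n q \<and>
      (\<forall>y\<in>?V. op_coords r d y \<in> U \<longrightarrow> q (op_coords r d y) \<noteq> 0 \<and>
         fmat_power_coords r (r * s) s (phi_map r (r * s) \<alpha> s y) ! k = p (op_coords r d y) / q (op_coords r d y))"
    using pq zariski_open_affine_space x by (intro exI[of _ "affine_space ?n"] exI[of _ p] exI[of _ q])
      (auto simp: affine_space_def length_op_coords)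
qed

section \<open>Distinct expansion points\<close>

lemma prod_linear_dvd_of_roots:
  fixes g :: "nat \<Rightarrow> 'a::idom" and p :: "'a poly"
  assumes "finite A" "inj_on g A" "\<forall>i\<in>A. poly p (g i) = 0"
  shows "(\<Prod>i\<in>A. [:- g i, 1:]) dvd p"
  using assms
proof (induction A rule: finite_induct)
  case empty then show ?case by simp
next
  case (insert x F)
  then obtain w where w: "p = (\<Prod>i\<in>F. [:- g i, 1:]) * w" by (auto elim: dvdE)
  have "g x \<noteq> g i" if "i \<in> F" for i using insert.prems(1) insert.hyps(2) that by (auto dest: inj_onD)
  then have "poly (\<Prod>i\<in>F. [:- g i, 1:]) (g x) \<noteq> 0" by (simp add: poly_prod insert.hyps(1))
  moreover have "poly p (g x) = 0" using insert.prems(2) by simp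
  ultimately have "[:- g x, 1:] dvd w" using w by (simp add: poly_eq_0_iff_dvd)
  then have "[:- g x, 1:] * (\<Prod>i\<in>F. [:- g i, 1:]) dvd w * (\<Prod>i\<in>F. [:- g i, 1:])"
    by (intro mult_dvd_mono dvd_refl)
  then show ?case unfolding prod.insert[OF insert.hyps] w by (simp only: mult.commute)
qed

definition const_coeffs :: "'a::field_char_0 fps poly \<Rightarrow> 'a poly" where
  "const_coeffs Q = map_poly (\<lambda>f. f $ 0) Q"

lemma const_coeffs_mult: "const_coeffs (p * q) = const_coeffs p * const_coeffs q"
  by (rule poly_eqI) (simp add: const_coeffs_def coeff_map_poly coeff_mult fps_sum_nth)

lemma const_coeffs_prod: "finite A \<Longrightarrow> const_coeffs (\<Prod>i\<in>A. f i) = (\<Prod>i\<in>A. const_coeffs (f i))"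
  by (induction A rule: finite_induct) (simp_all add: const_coeffs_def const_coeffs_mult[unfolded const_coeffs_def])

lemma eval_bivar_fps_eq_poly:
  fixes P :: "'a::field_char_0 poly poly"
  shows "eval_bivar_fps P h = poly (map_poly fps_of_poly P) h"
proof -
  have "degree (map_poly fps_of_poly P) = degree P" by (rule degree_map_poly) simp
  then show ?thesis unfolding eval_bivar_fps_def poly_altdef by (simp add: coeff_map_poly)
qed

text \<open>The roots g i of P(x, y) = 0 have pairwise distinct constant terms, since their product of
  linear factors divides P and reduces modulo x to a divisor of the squarefree P(0, y).\<close>

lemma inj_on_root_constant_terms:
  fixes P :: "'a::field_char_0 poly poly" and g :: "nat \<Rightarrow> 'a fps"
  assumes sqf: "squarefree (map_poly (\<lambda>c. poly c 0) P)"
    and roots: "\<forall>i<degree P. eval_bivar_fps P (g i) = 0"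
    and g_inj: "inj_on g {..<degree P}"
  shows "inj_on (\<lambda>i. g i $ 0) {..<degree P}"
proof (rule inj_onI, rule ccontr)
  fix i j assume i: "i \<in> {..<degree P}" and j: "j \<in> {..<degree P}" and eq: "g i $ 0 = g j $ 0"
    and ne: "i \<noteq> j"
  let ?A = "{..<degree P}"
  define L where "L k = [:- (g k $ 0), 1:]" for k
  have "(\<Prod>k\<in>?A. [:- g k, 1:]) dvd map_poly fps_of_poly P"
    by (rule prod_linear_dvd_of_roots) (use g_inj roots in \<open>auto simp: eval_bivar_fps_eq_poly\<close>)
  then have "const_coeffs (\<Prod>k\<in>?A. [:- g k, 1:]) dvd const_coeffs (map_poly fps_of_poly P)"
    by (metis dvdE dvdI const_coeffs_mult)
  then have "(\<Prod>k\<in>?A. L k) dvd map_poly (\<lambda>c. poly c 0) P"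
    unfolding const_coeffs_prod[OF finite_lessThan]
    by (simp add: const_coeffs_def L_def map_poly_pCons map_poly_map_poly o_def poly_0_coeff_0)
  moreover have "(\<Prod>k\<in>?A. L k) = L i * L j * (\<Prod>k\<in>?A - {i} - {j}. L k)"
    using i j ne by (simp add: prod.remove mult.assoc)
  moreover have "L i = L j" unfolding L_def using eq by simp
  ultimately have "L i ^ 2 dvd map_poly (\<lambda>c. poly c 0) P"
    by (metis dvd_mult_left power2_eq_square)
  then have "is_unit (L i)" using sqf unfolding squarefree_def by blast
  then show False by (simp add: L_def is_unit_poly_iff)
qed

theorem proposition19:
  fixes C :: "'a::field_char_0 set"
    and P :: "'a poly poly"
    and g :: "nat \<Rightarrow> 'a fps"
    and r_L d_L :: nat
  assumes alg_closed: "\<forall>p :: 'a poly. degree p \<noteq> 0 \<longrightarrow> (\<exists>z. poly p z = 0)"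
    and subfield: "is_subfield C"
    and closure: "algebraic_over C"
    and P_in_C: "\<forall>k m. coeff (coeff P k) m \<in> C"
    and rP: "degree P > 1"
    and P0_deg: "degree (map_poly (\<lambda>c. poly c 0) P) = degree P"
    and P0_sqf: "squarefree (map_poly (\<lambda>c. poly c 0) P)"
    and g_roots: "\<forall>i<degree P. eval_bivar_fps P (g i) = 0"
    and g_inj: "inj_on g {..<degree P}"
    and g_all: "\<forall>h. eval_bivar_fps P h = 0 \<longrightarrow> h \<in> g ` {..<degree P}"
    and dL: "d_L \<ge> (r_L * degree P - r_L + 1) * degree P"
  defines "r_P \<equiv> degree P"
    and "\<alpha> \<equiv> (\<lambda>i. fps_nth (g i) 0)"
    and "V \<equiv> {l. op_order l r_L \<and> op_degree_le l d_L \<and> (\<forall>i<degree P. poly (l r_L) (fps_nth (g i) 0) \<noteq> 0)}"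
    and "\<phi> \<equiv> phi_map r_L (r_L * degree P) (\<lambda>i. fps_nth (g i) 0) (degree P)"
  shows "regular_map ((Suc r_L) * (Suc d_L)) (r_P * (r_L * (r_L * r_P + 1 - r_L)))
           (op_coords r_L d_L) V (\<lambda>l. fmat_power_coords r_L (r_L * r_P) r_P (\<phi> l))
       \<and> \<phi> ` V = fmat_power r_L (r_L * r_P) r_P
       \<and> (\<exists>D. \<forall>M\<in>\<phi> ` V. zdim ((Suc r_L) * (Suc d_L)) (op_coords r_L d_L ` {l\<in>V. \<phi> l = M}) = D)"
proof -
  have s0: "0 < r_P" using rP unfolding r_P_def by simp
  have inj: "inj_on \<alpha> {..<r_P}"
    unfolding \<alpha>_def r_P_def by (rule inj_on_root_constant_terms[OF P0_sqf g_roots g_inj])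
  have rs: "r_L \<le> r_L * r_P" using s0 by (cases r_P) auto
  then have rd: "r_L \<le> Suc (r_L * r_P)" by linarith
  have sN: "r_P * (Suc (r_L * r_P) - r_L) \<le> d_L"
    using dL rs unfolding r_P_def by (simp add: Suc_diff_le mult.commute)
  have V: "V = op_space r_L d_L \<alpha> r_P" and \<phi>: "\<phi> = phi_map r_L (r_L * r_P) \<alpha> r_P"
    unfolding V_def op_space_def \<phi>_def \<alpha>_def r_P_def by simp_all
  have "\<phi> ` V = fmat_power r_L (r_L * r_P) r_P"
    unfolding V \<phi> using phi_map_in_fmat_power[OF _ rd] phi_map_surj_monic[OF inj _ sN s0] by fast
  moreover have "\<exists>D. \<forall>M\<in>\<phi> ` V. zdim (Suc r_L * Suc d_L) (op_coords r_L d_L ` {l\<in>V. \<phi> l = M}) = D"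
    unfolding V \<phi> using zdim_fibers_eq[OF inj s0 sN] unfolding phi_fiber_def by blast
  ultimately show ?thesis
    using regular_phi_map[OF s0, of r_L d_L \<alpha>] unfolding V \<phi> by simp
qed

end
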